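(* Let $N$ be a non-negative integer and let the parameters $h_1,h_2,l_1,l_2,\alpha_1,\alpha_2,\beta$ satisfy $h_2=l_2-1-N$. Put $\lambda_1=(h_1+h_2-l_1-l_2-\alpha_1-\alpha_2-\beta+2)/2$ and $\lambda_2=\lambda_1+\beta$, and assume $\lambda_2+\alpha_1>1$ and $\lambda_1+\alpha_2>1$ (real). Let $c_k(E)$ and $c(E)$ be the polynomials defined in the context and let $E_0$ satisfy $c(E_0)=0$. Let $\xi\neq0$ be independent of $x$ or proportional to $x$, chosen (together with $x$) so that no denominator below vanishes. Then the series $$g_1(x)=(1-q)x^{-\alpha_1}\frac{(q^{-l_1+1/2}\xi/t_1,\ q^{\lambda_1+\alpha_1}\xi/x;q)_\infty}{(q^{\lambda_1-h_1+\alpha_1-1/2}\xi/t_1,\ \xi/x;q)_\infty}\sum_{n=-\infty}^{\infty}\frac{(q^{\lambda_1-h_1+\alpha_1-1/2}\xi/t_1,\ \xi/x;q)_n}{(q^{-l_1+1/2}\xi/t_1,\ q^{\lambda_1+\alpha_1}\xi/x;q)_n}\sum_{k=0}^{N}q^{(\lambda_1+\alpha_1+\beta+k)n}\xi^{\lambda_1+\alpha_1+\beta+k}c_k(E_0),$$ $$g_2(x)=(1-q)x^{\lambda_1}\frac{(q^{-\lambda_1+h_1-\alpha_1+3/2}t_1/\xi,\ qx/\xi;q)_\infty}{(q^{l_1+1/2}t_1/\xi,\ q^{-\lambda_1-\alpha_1+1}x/\xi;q)_\infty}\sum_{n=-\infty}^{\infty}\frac{(q^{l_1+1/2}t_1/\xi,\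 q^{-\lambda_1-\alpha_1+1}x/\xi;q)_n}{(q^{-\lambda_1+h_1-\alpha_1+3/2}t_1/\xi,\ qx/\xi;q)_n}\sum_{k=0}^{N}q^{(\lambda_1+\alpha_2+N-k)n}\xi^{-\lambda_1-\alpha_2-N+k}c_k(E_0)$$ converge and satisfy $A^{\langle4\rangle}(x;h_1,h_2,l_1,l_2,\alpha_1,\alpha_2,\beta)g_i(x)=E_0g_i(x)$ for $i=1,2$.
   Context: $q\in\mathbb{C}$ with $0<|q|<1$; powers $q^{a}$ via a fixed branch of $\log q$ (for real $a$, $|q^a|=|q|^a$); $x^a,\xi^a$ fixed branches. $(a;q)_\infty=\prod_{k\ge0}(1-aq^k)$, $(a;q)_n=(a;q)_\infty/(aq^n;q)_\infty$ ($n\in\mathbb{Z}$), $(a_1,\dots,a_m;q)_n=\prod_i(a_i;q)_n$. $t_1,t_2$ fixed non-zero; $T_x^{\pm1}g(x)=g(q^{\pm1}x)$; $A^{\langle 4\rangle}(x;h_1,h_2,l_1,l_2,\alpha_1,\alpha_2,\beta)=x^{-1}(x-q^{h_1+1/2}t_1)(x-q^{h_2+1/2}t_2)T_x^{-1}+q^{\alpha_1+\alpha_2}x^{-1}(x-q^{l_1-1/2}t_1)(x-q^{l_2-1/2}t_2)T_x-\{(q^{\alpha_1}+q^{\alpha_2})x+q^{(h_1+h_2+l_1+l_2+\alpha_1+\alpha_2)/2}(q^{\beta/2}+q^{-\beta/2})t_1t_2x^{-1}\}$. Polynomials: for $n\ge1$ set $x_n=t_1t_2q^{-n+l_1+l_2+\alpha_2}(1-q^{n})(1-q^{n-1+\alpha_1+\lambda_1+\beta})$,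 $y_n=(q^{1-n-\beta}+q^{n-1-N})q^{-\lambda_1+h_1+1/2}t_1+(q^{1-n+\alpha_2}+q^{n-1-N+\alpha_1})q^{l_2-1/2}t_2$, $z_n=q^{n-N-2+\alpha_1}(1-q^{N-n+1+\alpha_2+\lambda_1})(1-q^{N-n+2})$. Set $c_{-1}(E)=0$, $c_0(E)=1$, $c_n(E)x_n=c_{n-1}(E)(E+y_n)-c_{n-2}(E)z_n$ for $n=1,\dots,N$, and $c(E)=x_1\cdots x_N[c_N(E)(E+y_{N+1})-c_{N-1}(E)z_{N+1}]$. *)

theory Defs
  imports "HOL-Analysis.Analysis"
begin

text \<open>Non-integer powers of q via a fixed logarithm Lq of q (q = exp Lq):
  q^a = exp (a * Lq).\<close>
definition qpw :: "complex \<Rightarrow> complex \<Rightarrow> complex" where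
  "qpw Lq a = exp (a * Lq)"

definition qpinf :: "complex \<Rightarrow> complex \<Rightarrow> complex" where
  "qpinf q a = (\<Prod>k. 1 - a * q ^ k)"

definition qpoch :: "complex \<Rightarrow> complex \<Rightarrow> int \<Rightarrow> complex" where
  "qpoch q a n = qpinf q a / qpinf q (a * q powi n)"

definition bilat_summable :: "(int \<Rightarrow> complex) \<Rightarrow> bool" where
  "bilat_summable f \<longleftrightarrow> summable (\<lambda>n. f (int n)) \<and> summable (\<lambda>n. f (- int (Suc n)))"

definition bilat_sum :: "(int \<Rightarrow> complex) \<Rightarrow> complex" where
  "bilat_sum f = (\<Sum>n. f (int n)) + (\<Sum>n. f (- int (Suc n)))"

definition xc :: "complex \<Rightarrow> complex \<Rightarrow> complex \<Rightarrow> complex \<Rightarrow> complex \<Rightarrow> complex \<Rightarrow> complex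
    \<Rightarrow> complex \<Rightarrow> complex \<Rightarrow> complex \<Rightarrow> nat \<Rightarrow> nat \<Rightarrow> complex" where
  "xc Lq t1 t2 h1 l1 l2 a1 a2 b lam1 N n =
     t1 * t2 * qpw Lq (- of_nat n + l1 + l2 + a2) * (1 - qpw Lq (of_nat n))
       * (1 - qpw Lq (of_nat n - 1 + a1 + lam1 + b))"

definition yc :: "complex \<Rightarrow> complex \<Rightarrow> complex \<Rightarrow> complex \<Rightarrow> complex \<Rightarrow> complex \<Rightarrow> complex
    \<Rightarrow> complex \<Rightarrow> complex \<Rightarrow> complex \<Rightarrow> nat \<Rightarrow> nat \<Rightarrow> complex" where
  "yc Lq t1 t2 h1 l1 l2 a1 a2 b lam1 N n =
     (qpw Lq (1 - of_nat n - b) + qpw Lq (of_nat n - 1 - of_nat N)) * qpw Lq (- lam1 + h1 + 1/2) * t1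
   + (qpw Lq (1 - of_nat n + a2) + qpw Lq (of_nat n - 1 - of_nat N + a1)) * qpw Lq (l2 - 1/2) * t2"

definition zc :: "complex \<Rightarrow> complex \<Rightarrow> complex \<Rightarrow> complex \<Rightarrow> complex \<Rightarrow> complex \<Rightarrow> complex
    \<Rightarrow> complex \<Rightarrow> complex \<Rightarrow> complex \<Rightarrow> nat \<Rightarrow> nat \<Rightarrow> complex" where
  "zc Lq t1 t2 h1 l1 l2 a1 a2 b lam1 N n =
     qpw Lq (of_nat n - of_nat N - 2 + a1) * (1 - qpw Lq (of_nat N - of_nat n + 1 + a2 + lam1))
       * (1 - qpw Lq (of_nat N - of_nat n + 2))"

text \<open>c_n(E): c_{-1}=0, c_0=1, c_n x_n = c_{n-1}(E+y_n) - c_{n-2} z_n.\<close>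
fun cseq :: "complex \<Rightarrow> complex \<Rightarrow> complex \<Rightarrow> complex \<Rightarrow> complex \<Rightarrow> complex \<Rightarrow> complex
    \<Rightarrow> complex \<Rightarrow> complex \<Rightarrow> complex \<Rightarrow> nat \<Rightarrow> complex \<Rightarrow> nat \<Rightarrow> complex" where
  "cseq Lq t1 t2 h1 l1 l2 a1 a2 b lam1 N E 0 = 1"
| "cseq Lq t1 t2 h1 l1 l2 a1 a2 b lam1 N E (Suc 0) =
     (E + yc Lq t1 t2 h1 l1 l2 a1 a2 b lam1 N 1) / xc Lq t1 t2 h1 l1 l2 a1 a2 b lam1 N 1"
| "cseq Lq t1 t2 h1 l1 l2 a1 a2 b lam1 N E (Suc (Suc n)) =
     (cseq Lq t1 t2 h1 l1 l2 a1 a2 b lam1 N E (Suc n) * (E + yc Lq t1 t2 h1 l1 l2 a1 a2 b lam1 N (n + 2))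
      - cseq Lq t1 t2 h1 l1 l2 a1 a2 b lam1 N E n * zc Lq t1 t2 h1 l1 l2 a1 a2 b lam1 N (n + 2))
     / xc Lq t1 t2 h1 l1 l2 a1 a2 b lam1 N (n + 2)"

definition cpoly :: "complex \<Rightarrow> complex \<Rightarrow> complex \<Rightarrow> complex \<Rightarrow> complex \<Rightarrow> complex \<Rightarrow> complex
    \<Rightarrow> complex \<Rightarrow> complex \<Rightarrow> complex \<Rightarrow> nat \<Rightarrow> complex \<Rightarrow> complex" where
  "cpoly Lq t1 t2 h1 l1 l2 a1 a2 b lam1 N E =
     (\<Prod>i=1..N. xc Lq t1 t2 h1 l1 l2 a1 a2 b lam1 N i)
     * (cseq Lq t1 t2 h1 l1 l2 a1 a2 b lam1 N E N * (E + yc Lq t1 t2 h1 l1 l2 a1 a2 b lam1 N (N + 1))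
        - (if N = 0 then 0 else cseq Lq t1 t2 h1 l1 l2 a1 a2 b lam1 N E (N - 1))
          * zc Lq t1 t2 h1 l1 l2 a1 a2 b lam1 N (N + 1))"

text \<open>Functions are written in the logarithmic variable u with x = exp u (fixed branch
  of log x), so x^a = exp (a*u) and T_x^{+-1} is u |-> u +- Lq.  Similarly
  xi = exp (Lxi u), xi^a = exp (a * Lxi u).\<close>

definition A4 :: "complex \<Rightarrow> complex \<Rightarrow> complex \<Rightarrow> complex \<Rightarrow> complex \<Rightarrow> complex \<Rightarrow> complex
    \<Rightarrow> complex \<Rightarrow> complex \<Rightarrow> complex \<Rightarrow> (complex \<Rightarrow> complex) \<Rightarrow> complex \<Rightarrow> complex" where
  "A4 Lq t1 t2 h1 h2 l1 l2 a1 a2 b g u =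
     (let x = exp u in
        (x - qpw Lq (h1 + 1/2) * t1) * (x - qpw Lq (h2 + 1/2) * t2) / x * g (u - Lq)
      + qpw Lq (a1 + a2) * (x - qpw Lq (l1 - 1/2) * t1) * (x - qpw Lq (l2 - 1/2) * t2) / x * g (u + Lq)
      - ((qpw Lq a1 + qpw Lq a2) * x
         + qpw Lq ((h1 + h2 + l1 + l2 + a1 + a2) / 2) * (qpw Lq (b/2) + qpw Lq (- b/2)) * t1 * t2 / x)
        * g u)"

definition g1_term :: "complex \<Rightarrow> complex \<Rightarrow> complex \<Rightarrow> complex \<Rightarrow> complex \<Rightarrow> complex \<Rightarrow> complex
    \<Rightarrow> complex \<Rightarrow> complex \<Rightarrow> complex \<Rightarrow> nat \<Rightarrow> (complex \<Rightarrow> complex) \<Rightarrow> complex \<Rightarrow> complex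
    \<Rightarrow> int \<Rightarrow> complex" where
  "g1_term Lq t1 t2 h1 l1 l2 a1 a2 b lam1 N Lxi E u n =
     (let q = exp Lq; x = exp u; xi = exp (Lxi u);
          A1 = qpw Lq (- l1 + 1/2) * xi / t1; A2 = qpw Lq (lam1 + a1) * xi / x;
          B1 = qpw Lq (lam1 - h1 + a1 - 1/2) * xi / t1; B2 = xi / x
      in qpoch q B1 n * qpoch q B2 n / (qpoch q A1 n * qpoch q A2 n)
         * (\<Sum>k=0..N. qpw Lq ((lam1 + a1 + b + of_nat k) * of_int n)
                       * exp ((lam1 + a1 + b + of_nat k) * Lxi u)
                       * cseq Lq t1 t2 h1 l1 l2 a1 a2 b lam1 N E k))"

definition g1 :: "complex \<Rightarrow> complex \<Rightarrow> complex \<Rightarrow> complex \<Rightarrow> complex \<Rightarrow> complex \<Rightarrow> complex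
    \<Rightarrow> complex \<Rightarrow> complex \<Rightarrow> complex \<Rightarrow> nat \<Rightarrow> (complex \<Rightarrow> complex) \<Rightarrow> complex \<Rightarrow> complex
    \<Rightarrow> complex" where
  "g1 Lq t1 t2 h1 l1 l2 a1 a2 b lam1 N Lxi E u =
     (let q = exp Lq; x = exp u; xi = exp (Lxi u);
          A1 = qpw Lq (- l1 + 1/2) * xi / t1; A2 = qpw Lq (lam1 + a1) * xi / x;
          B1 = qpw Lq (lam1 - h1 + a1 - 1/2) * xi / t1; B2 = xi / x
      in (1 - q) * exp (- a1 * u) * (qpinf q A1 * qpinf q A2) / (qpinf q B1 * qpinf q B2)
         * bilat_sum (g1_term Lq t1 t2 h1 l1 l2 a1 a2 b lam1 N Lxi E u))"

definition g2_term :: "complex \<Rightarrow> complex \<Rightarrow> complex \<Rightarrow> complex \<Rightarrow> complex \<Rightarrow> complex \<Rightarrow> complex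
    \<Rightarrow> complex \<Rightarrow> complex \<Rightarrow> complex \<Rightarrow> nat \<Rightarrow> (complex \<Rightarrow> complex) \<Rightarrow> complex \<Rightarrow> complex
    \<Rightarrow> int \<Rightarrow> complex" where
  "g2_term Lq t1 t2 h1 l1 l2 a1 a2 b lam1 N Lxi E u n =
     (let q = exp Lq; x = exp u; xi = exp (Lxi u);
          C1 = qpw Lq (- lam1 + h1 - a1 + 3/2) * t1 / xi; C2 = q * x / xi;
          D1 = qpw Lq (l1 + 1/2) * t1 / xi; D2 = qpw Lq (- lam1 - a1 + 1) * x / xi
      in qpoch q D1 n * qpoch q D2 n / (qpoch q C1 n * qpoch q C2 n)
         * (\<Sum>k=0..N. qpw Lq ((lam1 + a2 + of_nat N - of_nat k) * of_int n)
                       * exp ((- lam1 - a2 - of_nat N + of_nat k) * Lxi u)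
                       * cseq Lq t1 t2 h1 l1 l2 a1 a2 b lam1 N E k))"

definition g2 :: "complex \<Rightarrow> complex \<Rightarrow> complex \<Rightarrow> complex \<Rightarrow> complex \<Rightarrow> complex \<Rightarrow> complex
    \<Rightarrow> complex \<Rightarrow> complex \<Rightarrow> complex \<Rightarrow> nat \<Rightarrow> (complex \<Rightarrow> complex) \<Rightarrow> complex \<Rightarrow> complex
    \<Rightarrow> complex" where
  "g2 Lq t1 t2 h1 l1 l2 a1 a2 b lam1 N Lxi E u =
     (let q = exp Lq; x = exp u; xi = exp (Lxi u);
          C1 = qpw Lq (- lam1 + h1 - a1 + 3/2) * t1 / xi; C2 = q * x / xi;
          D1 = qpw Lq (l1 + 1/2) * t1 / xi; D2 = qpw Lq (- lam1 - a1 + 1) * x / xi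
      in (1 - q) * exp (lam1 * u) * (qpinf q C1 * qpinf q C2) / (qpinf q D1 * qpinf q D2)
         * bilat_sum (g2_term Lq t1 t2 h1 l1 l2 a1 a2 b lam1 N Lxi E u))"

text \<open>No q-Pochhammer symbol with argument a (finite, infinite, any integer index)
  has a vanishing factor: a q^m \<noteq> 1 for all integers m.\<close>
definition qgeneric :: "complex \<Rightarrow> complex \<Rightarrow> bool" where
  "qgeneric q a \<longleftrightarrow> (\<forall>m::int. a * q powi m \<noteq> 1)"

end

(*
  Both series are Jackson integrals over the lattice xi q^Z of a kernel K (a ratio of
  infinite q-products in x and xi) against the polynomial P(w) = sum_k c_k w^k, with
  w = xi for g_1 and w = 1/xi for g_2.  Shifting x by q^(+-1) and shifting xi along its
  lattice act on K by rational factors, and a direct computation shows that K intertwines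
  A<4> in x with a three-term q-difference operator in w.  The recursion for the c_k
  together with c(E_0) = 0 says precisely that P is an eigenfunction, with eigenvalue E_0,
  of the adjoint of that operator.  Hence (A<4> - E_0) g becomes the sum of a telescoping
  series, which vanishes because the summands decay geometrically at both ends of the
  lattice; this decay is where lambda_2 + alpha_1 > 1 and lambda_1 + alpha_2 > 1 are used.
  Since xi is constant or proportional to x, the sums defining g(q^(+-1) x) run over the
  same lattice and are therefore shifted copies of the same Jackson integrals.
*)
theory Submission
  imports Defs
begin

section \<open>Infinite \<open>q\<close>-products\<close>

lemma convergent_prod_qpinf:
  fixes q a :: complex
  assumes "norm q < 1"
  shows "convergent_prod (\<lambda>k. 1 - a * q ^ k)"
proof -
  have "summable (\<lambda>k. norm a * norm q ^ k)"
    using assms by (intro summable_mult summable_geometric) simp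
  then have "summable (\<lambda>k. norm ((1 - a * q ^ k) - 1))"
    by (simp add: norm_mult norm_power)
  then show ?thesis
    by (intro abs_convergent_prod_imp_convergent_prod summable_imp_abs_convergent_prod)
qed

lemma qpinf_eq_prod_mult_qpinf:
  fixes q a :: complex
  assumes "norm q < 1"
  shows "qpinf q a = (\<Prod>k<n. 1 - a * q ^ k) * qpinf q (a * q ^ n)"
proof -
  have "(\<lambda>k. 1 - a * q ^ k) has_prod ((\<Prod>k<n. 1 - a * q ^ k) * (\<Prod>k. 1 - a * q ^ (k + n)))"
    by (rule has_prod_ignore_initial_segment'[OF convergent_prod_qpinf[OF assms]])
  then show ?thesis
    unfolding qpinf_def by (simp add: has_prod_unique[symmetric] power_add mult_ac)
qed

lemma qpinf_rec:
  fixes q a :: complex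
  assumes "norm q < 1"
  shows "qpinf q a = (1 - a) * qpinf q (a * q)"
  using qpinf_eq_prod_mult_qpinf[OF assms, of a 1] by simp

lemma LIMSEQ_prod_qpinf:
  fixes q a :: complex
  assumes "norm q < 1"
  shows "(\<lambda>n. \<Prod>k<n. 1 - a * q ^ k) \<longlonglongrightarrow> qpinf q a"
proof -
  have "(\<lambda>n. \<Prod>k\<le>n. 1 - a * q ^ k) \<longlonglongrightarrow> qpinf q a"
    unfolding qpinf_def by (rule convergent_prod_LIMSEQ[OF convergent_prod_qpinf[OF assms]])
  then have "(\<lambda>n. \<Prod>k<Suc n. 1 - a * q ^ k) \<longlonglongrightarrow> qpinf q a"
    by (simp add: lessThan_Suc_atMost)
  then show ?thesis
    by (rule LIMSEQ_imp_Suc)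
qed

lemma qgeneric_mult_powi:
  assumes "qgeneric q a" "q \<noteq> 0"
  shows "qgeneric q (a * q powi n)"
  unfolding qgeneric_def
proof
  fix m :: int
  have "a * q powi n * q powi m = a * q powi (n + m)"
    using assms(2) by (simp add: power_int_add mult_ac)
  then show "a * q powi n * q powi m \<noteq> 1"
    using assms(1) unfolding qgeneric_def by metis
qed

lemma qgeneric_mult_q: "qgeneric q a \<Longrightarrow> q \<noteq> 0 \<Longrightarrow> qgeneric q (a * q)"
  using qgeneric_mult_powi[of q a 1] by simp

lemma qgeneric_div_q: "qgeneric q a \<Longrightarrow> q \<noteq> 0 \<Longrightarrow> qgeneric q (a / q)"
  using qgeneric_mult_powi[of q a "-1"] by (simp add: power_int_minus divide_inverse)

lemma qgeneric_mult_power_neq_1: "qgeneric q a \<Longrightarrow> a * q ^ k \<noteq> 1"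
  unfolding qgeneric_def by (metis power_int_of_nat)

lemma qgeneric_neq_1: "qgeneric q a \<Longrightarrow> a \<noteq> 1"
  using qgeneric_mult_power_neq_1[of q a 0] by simp

lemma qgeneric_q_div:
  assumes "qgeneric q b" "b \<noteq> 0" "q \<noteq> 0"
  shows "qgeneric q (q / b)"
  unfolding qgeneric_def
proof
  fix m :: int
  have "b * q powi (- m - 1) \<noteq> 1"
    using assms(1) unfolding qgeneric_def by blast
  then show "q / b * q powi m \<noteq> 1"
    using assms(2,3) by (auto simp: power_int_diff power_int_minus field_simps)
qed

lemma qpinf_nonzero:
  fixes q a :: complex
  assumes "norm q < 1" "qgeneric q a"
  shows "qpinf q a \<noteq> 0"
  unfolding qpinf_def using assms
  by (intro prodinf_nonzero convergent_prod_qpinf) (auto dest: qgeneric_mult_power_neq_1)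

definition qratio :: "complex \<Rightarrow> complex \<Rightarrow> complex \<Rightarrow> complex" where
  "qratio q a b = qpinf q a / qpinf q b"

lemma qratio_mult_q:
  fixes q a b :: complex
  assumes "norm q < 1" "a \<noteq> 1" "b \<noteq> 1"
  shows "qratio q (a * q) (b * q) = (1 - b) / (1 - a) * qratio q a b"
proof -
  have "1 - a \<noteq> 0" "1 - b \<noteq> 0"
    using assms(2,3) by auto
  moreover have "qratio q a b = (1 - a) / (1 - b) * qratio q (a * q) (b * q)"
    unfolding qratio_def qpinf_rec[OF assms(1), of a] qpinf_rec[OF assms(1), of b]
    by (rule times_divide_times_eq[symmetric])
  ultimately show ?thesis
    by simp
qed

lemma qratio_div_q:
  fixes q a b :: complex
  assumes "norm q < 1" "q \<noteq> 0"
  shows "qratio q (a / q) (b / q) = (1 - a / q) / (1 - b / q) * qratio q a b"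
  using qpinf_rec[OF assms(1), of "a / q"] qpinf_rec[OF assms(1), of "b / q"] assms(2)
  unfolding qratio_def by simp

lemma qratio_inverse:
  fixes q a b :: complex
  assumes "norm q < 1" "qgeneric q a" "qgeneric q b"
  shows "qratio q a b * qratio q b a = 1"
  using qpinf_nonzero[OF assms(1,2)] qpinf_nonzero[OF assms(1,3)] by (simp add: qratio_def)

text \<open>No side conditions are needed: if a product vanishes, both sides are \<open>0\<close>
  by the convention \<open>x / 0 = 0\<close>.\<close>
lemma qpoch_div_qpoch:
  "qpoch q b n / qpoch q a n = qratio q b a * qratio q (a * q powi n) (b * q powi n)"
  unfolding qpoch_def qratio_def by (simp add: field_simps)

lemma Bseq_qratio_mult_power:
  fixes q A B :: complex
  assumes q: "norm q < 1" and gen: "qgeneric q A" "qgeneric q B"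
  shows "Bseq (\<lambda>n. qratio q (A * q ^ n) (B * q ^ n))"
proof -
  define pA where "pA n = (\<Prod>k<n. 1 - A * q ^ k)" for n
  define pB where "pB n = (\<Prod>k<n. 1 - B * q ^ k)" for n
  have "pA n \<noteq> 0" "pB n \<noteq> 0" for n
    unfolding pA_def pB_def using gen qgeneric_mult_power_neq_1 by (auto simp: prod_zero_iff)
  then have "qratio q (A * q ^ n) (B * q ^ n) = qratio q A B * (pB n / pA n)" for n
    unfolding qratio_def pA_def pB_def
      qpinf_eq_prod_mult_qpinf[OF q, of A n] qpinf_eq_prod_mult_qpinf[OF q, of B n]
    by (simp add: field_simps)
  moreover have "(\<lambda>n. qratio q A B * (pB n / pA n)) \<longlonglongrightarrow> qratio q A B * (qpinf q B / qpinf q A)"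
    unfolding pA_def pB_def
    by (intro tendsto_intros LIMSEQ_prod_qpinf q qpinf_nonzero gen)
  ultimately show ?thesis
    by (intro convergent_imp_Bseq) (auto simp: convergent_def)
qed

lemma qpinf_div_power:
  fixes q A :: complex
  assumes q: "norm q < 1" "q \<noteq> 0"
  shows "qpinf q (A / q ^ n) = (\<Prod>j<n. 1 - A / q ^ Suc j) * qpinf q A"
proof (induction n)
  case (Suc n)
  have "qpinf q (A / q ^ Suc n) = (1 - A / q ^ Suc n) * qpinf q (A / q ^ Suc n * q)"
    by (rule qpinf_rec[OF q(1)])
  also have "A / q ^ Suc n * q = A / q ^ n"
    using q(2) by (simp add: field_simps)
  finally show ?case
    using Suc by (simp add: mult_ac)
qed simp

text \<open>For negative indices the ratio grows like \<open>(A/B)\<^sup>n\<close>: the factors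
  \<open>1 - A q\<^sup>-\<^sup>j\<close> are rewritten as \<open>-(A q\<^sup>-\<^sup>j) (1 - q\<^sup>j/A)\<close>.\<close>
lemma Bseq_qratio_div_power:
  fixes q A B :: complex
  assumes q: "norm q < 1" "q \<noteq> 0" and gen: "qgeneric q A" "qgeneric q B"
    and nz: "A \<noteq> 0" "B \<noteq> 0"
  shows "Bseq (\<lambda>n. qratio q (A / q ^ n) (B / q ^ n) / (A / B) ^ n)"
proof -
  have gen': "qgeneric q (q / B)"
    by (rule qgeneric_q_div[OF gen(2) nz(2) q(2)])
  have factor: "(1 - A / q ^ Suc j) / (1 - B / q ^ Suc j)
      = (A / B) * ((1 - (q / A) * q ^ j) / (1 - (q / B) * q ^ j))" for j
  proof -
    have "1 - (q / B) * q ^ j \<noteq> 0"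
      using qgeneric_mult_power_neq_1[OF gen', of j] by auto
    then show ?thesis
      using nz q(2) by (simp add: field_simps)
  qed
  have "qratio q (A / q ^ n) (B / q ^ n) / (A / B) ^ n
      = qratio q A B * ((\<Prod>j<n. 1 - (q / A) * q ^ j) / (\<Prod>j<n. 1 - (q / B) * q ^ j))" for n
  proof -
    have "qratio q (A / q ^ n) (B / q ^ n)
        = qratio q A B * (\<Prod>j<n. (1 - A / q ^ Suc j) / (1 - B / q ^ Suc j))"
      unfolding qratio_def by (simp add: qpinf_div_power[OF q] prod_dividef mult_ac)
    also have "\<dots> = qratio q A B * ((A / B) ^ n
        * (\<Prod>j<n. (1 - (q / A) * q ^ j) / (1 - (q / B) * q ^ j)))"
      unfolding factor prod.distrib by simp
    finally show ?thesis
      using nz by (simp add: prod_dividef)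
  qed
  moreover have "(\<lambda>n. qratio q A B * ((\<Prod>j<n. 1 - (q / A) * q ^ j) / (\<Prod>j<n. 1 - (q / B) * q ^ j)))
      \<longlonglongrightarrow> qratio q A B * (qpinf q (q / A) / qpinf q (q / B))"
    by (intro tendsto_intros LIMSEQ_prod_qpinf q qpinf_nonzero gen')
  ultimately show ?thesis
    by (intro convergent_imp_Bseq) (auto simp: convergent_def)
qed

section \<open>Bilateral series\<close>

lemma summable_Bseq_mult_geometric:
  fixes f g :: "nat \<Rightarrow> complex"
  assumes "Bseq f" "Bseq g" "norm z < 1"
  shows "summable (\<lambda>n. f n * g n * z ^ n)"
proof -
  obtain F G where F: "F > 0" "\<And>n. norm (f n) \<le> F" and G: "G > 0" "\<And>n. norm (g n) \<le> G"
    using assms(1,2) by (auto elim!: BseqE)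
  show ?thesis
  proof (rule summable_comparison_test')
    show "summable (\<lambda>n. F * G * norm z ^ n)"
      using assms(3) by (intro summable_mult summable_geometric) simp
    show "norm (f n * g n * z ^ n) \<le> F * G * norm z ^ n" for n
      unfolding norm_mult norm_power using F G by (intro mult_mono) auto
  qed
qed

lemma bilat_summable_qratio_geometric:
  fixes q A1 A2 B1 B2 z :: complex
  assumes q: "norm q < 1" "q \<noteq> 0"
    and gen: "qgeneric q A1" "qgeneric q A2" "qgeneric q B1" "qgeneric q B2"
    and nz: "A1 \<noteq> 0" "A2 \<noteq> 0" "B1 \<noteq> 0" "B2 \<noteq> 0" "z \<noteq> 0"
    and z: "norm z < 1" "norm (A1 * A2 / (B1 * B2) / z) < 1"
  shows "bilat_summable (\<lambda>n. qratio q (A1 * q powi n) (B1 * q powi n)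
                              * qratio q (A2 * q powi n) (B2 * q powi n) * z powi n)"
  unfolding bilat_summable_def
proof
  show "summable (\<lambda>n. qratio q (A1 * q powi int n) (B1 * q powi int n)
      * qratio q (A2 * q powi int n) (B2 * q powi int n) * z powi int n)"
    unfolding power_int_of_nat
    by (intro summable_Bseq_mult_geometric Bseq_qratio_mult_power q gen z)
  define F where "F A B k = qratio q (A / q ^ k) (B / q ^ k) / (A / B) ^ k" for A B k
  have "summable (\<lambda>k. F A1 B1 k * F A2 B2 k * (A1 * A2 / (B1 * B2) / z) ^ k)"
    unfolding F_def by (intro summable_Bseq_mult_geometric Bseq_qratio_div_power q gen nz z)
  then have "summable (\<lambda>k. F A1 B1 (Suc k) * F A2 B2 (Suc k) * (A1 * A2 / (B1 * B2) / z) ^ Suc k)"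
    by (rule summable_Suc_iff[THEN iffD2])
  moreover have "qratio q (A1 * q powi - int k) (B1 * q powi - int k)
      * qratio q (A2 * q powi - int k) (B2 * q powi - int k) * z powi - int k
      = F A1 B1 k * F A2 B2 k * (A1 * A2 / (B1 * B2) / z) ^ k" for k
  proof -
    have "A * q powi - int k = A / q ^ k" "z powi - int k = 1 / z ^ k" for A
      by (simp_all add: power_int_minus power_int_of_nat divide_inverse)
    then show ?thesis
      unfolding F_def using nz by (simp add: power_divide power_mult_distrib)
  qed
  ultimately show "summable (\<lambda>n. qratio q (A1 * q powi - int (Suc n)) (B1 * q powi - int (Suc n))
      * qratio q (A2 * q powi - int (Suc n)) (B2 * q powi - int (Suc n)) * z powi - int (Suc n))"
    by (simp only:)
qed

lemma bilat_summable_add: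
  "bilat_summable f \<Longrightarrow> bilat_summable g \<Longrightarrow> bilat_summable (\<lambda>n. f n + g n)"
  by (auto simp: bilat_summable_def intro: summable_add)

lemma bilat_sum_add:
  "bilat_summable f \<Longrightarrow> bilat_summable g \<Longrightarrow> bilat_sum (\<lambda>n. f n + g n) = bilat_sum f + bilat_sum g"
  by (auto simp: bilat_summable_def bilat_sum_def suminf_add[symmetric])

lemma bilat_summable_diff:
  "bilat_summable f \<Longrightarrow> bilat_summable g \<Longrightarrow> bilat_summable (\<lambda>n. f n - g n)"
  by (auto simp: bilat_summable_def intro: summable_diff)

lemma bilat_sum_diff:
  "bilat_summable f \<Longrightarrow> bilat_summable g \<Longrightarrow> bilat_sum (\<lambda>n. f n - g n) = bilat_sum f - bilat_sum g"
  by (auto simp: bilat_summable_def bilat_sum_def suminf_diff[symmetric])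

lemma bilat_summable_cmult: "bilat_summable f \<Longrightarrow> bilat_summable (\<lambda>n. c * f n)"
  by (auto simp: bilat_summable_def intro: summable_mult)

lemma bilat_sum_cmult: "bilat_summable f \<Longrightarrow> bilat_sum (\<lambda>n. c * f n) = c * bilat_sum f"
  by (auto simp: bilat_summable_def bilat_sum_def suminf_mult distrib_left)

lemma bilat_summable_sum:
  "(\<And>k. k \<in> K \<Longrightarrow> bilat_summable (f k)) \<Longrightarrow> bilat_summable (\<lambda>n. \<Sum>k\<in>K. f k n)"
  by (induction K rule: infinite_finite_induct)
    (auto simp: bilat_summable_def intro: summable_add)

lemma bilat_summable_shift_1: "bilat_summable (\<lambda>n. f (n + 1)) \<longleftrightarrow> bilat_summable f"
proof -
  have "(\<lambda>n. f (int n + 1)) = (\<lambda>n. f (int (Suc n)))" "(\<lambda>n. f (- int (Suc n) + 1)) = (\<lambda>n. f (- int n))"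
    by (auto simp: add.commute)
  moreover have "summable (\<lambda>n. f (- int n)) \<longleftrightarrow> summable (\<lambda>n. f (- int (Suc n)))"
    using summable_Suc_iff[of "\<lambda>n. f (- int n)"] by simp
  ultimately show ?thesis
    unfolding bilat_summable_def using summable_Suc_iff[of "\<lambda>n. f (int n)"] by simp
qed

lemma bilat_sum_shift_1:
  assumes "bilat_summable f"
  shows "bilat_sum (\<lambda>n. f (n + 1)) = bilat_sum f"
proof -
  have "(\<lambda>n. f (int n + 1)) = (\<lambda>n. f (int (Suc n)))" "(\<lambda>n. f (- int (Suc n) + 1)) = (\<lambda>n. f (- int n))"
    by (auto simp: add.commute)
  moreover have "summable (\<lambda>n. f (int n))" "summable (\<lambda>n. f (- int n))"
    using assms summable_Suc_iff[of "\<lambda>n. f (- int n)"] by (auto simp: bilat_summable_def)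
  then have "(\<Sum>n. f (int (Suc n))) = (\<Sum>n. f (int n)) - f 0"
    "(\<Sum>n. f (- int (Suc n))) = (\<Sum>n. f (- int n)) - f 0"
    using suminf_split_head by fastforce+
  ultimately show ?thesis
    unfolding bilat_sum_def by simp
qed

lemma bilat_summable_shift: "bilat_summable (\<lambda>n. f (n + d)) \<longleftrightarrow> bilat_summable f"
proof (induction d arbitrary: f rule: int_induct[of _ 0])
  case (step1 i)
  then show ?case
    using bilat_summable_shift_1[of "\<lambda>n. f (n + i)"] by (simp add: ac_simps)
next
  case (step2 i)
  then show ?case
    using bilat_summable_shift_1[of "\<lambda>n. f (n + (i - 1))"] by (simp add: algebra_simps)
qed simp

lemma bilat_sum_shift:
  assumes "bilat_summable f"
  shows "bilat_sum (\<lambda>n. f (n + d)) = bilat_sum f"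
  using assms
proof (induction d arbitrary: f rule: int_induct[of _ 0])
  case (step1 i)
  then show ?case
    using bilat_sum_shift_1[of "\<lambda>n. f (n + i)"] bilat_summable_shift[of f i]
    by (simp add: ac_simps)
next
  case (step2 i)
  then show ?case
    using bilat_sum_shift_1[of "\<lambda>n. f (n + (i - 1))"] bilat_summable_shift[of f "i - 1"]
    by (simp add: algebra_simps)
qed simp

lemma bilat_sum_telescope: "bilat_summable H \<Longrightarrow> bilat_sum (\<lambda>n. H n - H (n + 1)) = 0"
  by (simp add: bilat_sum_diff bilat_summable_shift bilat_sum_shift)

section \<open>Jackson integrals\<close>

definition laurent1 :: "(complex \<Rightarrow> complex) \<Rightarrow> bool" where
  "laurent1 f \<longleftrightarrow> (\<exists>c0 c1 c2. \<forall>w. w \<noteq> 0 \<longrightarrow> f w = c0 / w + c1 + c2 * w)"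

lemma laurent1_const: "laurent1 (\<lambda>_. c)"
  unfolding laurent1_def by (rule exI[of _ 0], rule exI[of _ c]) auto

lemma bilat_summable_laurent1_poly:
  fixes G W :: "int \<Rightarrow> complex" and f :: "complex \<Rightarrow> complex"
  assumes f: "laurent1 f" and W: "\<And>n. W n \<noteq> 0"
    and G: "\<And>j. - 1 \<le> j \<Longrightarrow> j \<le> int N + 1 \<Longrightarrow> bilat_summable (\<lambda>n. G n * W n powi j)"
  shows "bilat_summable (\<lambda>n. f (W n) * (\<Sum>k\<le>N. cf k * W n ^ k) * G n)"
proof -
  obtain c0 c1 c2 where f_eq: "\<And>w. w \<noteq> 0 \<Longrightarrow> f w = c0 / w + c1 + c2 * w"
    using f unfolding laurent1_def by blast
  have "f (W n) * (\<Sum>k\<le>N. cf k * W n ^ k) * G n = (\<Sum>k\<le>N. cf k * (c0 * (G n * W n powi (int k - 1))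
      + c1 * (G n * W n powi int k) + c2 * (G n * W n powi (int k + 1))))" for n
    using W[of n] unfolding f_eq[OF W]
    by (simp add: power_int_diff power_int_add power_int_of_nat sum_distrib_left sum_distrib_right
        algebra_simps)
  moreover have "bilat_summable (\<lambda>n. \<Sum>k\<le>N. cf k * (c0 * (G n * W n powi (int k - 1))
      + c1 * (G n * W n powi int k) + c2 * (G n * W n powi (int k + 1))))"
    by (intro bilat_summable_sum bilat_summable_cmult bilat_summable_add G) auto
  ultimately show ?thesis
    by simp
qed

lemma bilat_summable_laurent1_poly_pred:
  fixes K W :: "int \<Rightarrow> complex" and f :: "complex \<Rightarrow> complex"
  assumes f: "laurent1 f" and W: "\<And>n. W (n + 1) = \<rho> * W n" "\<And>n. W n \<noteq> 0"
    and K: "\<And>j. - 1 \<le> j \<Longrightarrow> j \<le> int N + 1 \<Longrightarrow> bilat_summable (\<lambda>n. K n * W n powi j)"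
  shows "bilat_summable (\<lambda>n. f (W n) * (\<Sum>k\<le>N. cf k * W n ^ k) * K (n - 1))"
proof (rule bilat_summable_laurent1_poly[OF f W(2)])
  fix j :: int
  assume "- 1 \<le> j" "j \<le> int N + 1"
  then have "bilat_summable (\<lambda>n. \<rho> powi j * (K (n + - 1) * W (n + - 1) powi j))"
    using bilat_summable_shift[of "\<lambda>n. K n * W n powi j" "- 1"] K[of j]
    by (intro bilat_summable_cmult) simp
  moreover have "W n = \<rho> * W (n - 1)" for n
    using W(1)[of "n - 1"] by simp
  ultimately show "bilat_summable (\<lambda>n. K (n - 1) * W n powi j)"
    by (metis (no_types, lifting) ext diff_conv_add_uminus mult.left_commute power_int_mult_distrib)
qed

lemma bilat_summable_laurent1_poly_div:
  fixes K W :: "int \<Rightarrow> complex" and f :: "complex \<Rightarrow> complex"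
  assumes f: "laurent1 f" and W: "\<And>n. W n \<noteq> 0" and \<rho>: "\<rho> \<noteq> 0"
    and K: "\<And>j. - 1 \<le> j \<Longrightarrow> j \<le> int N + 1 \<Longrightarrow> bilat_summable (\<lambda>n. K n * W n powi j)"
  shows "bilat_summable (\<lambda>n. f (W n / \<rho>) * (\<Sum>k\<le>N. cf k * (W n / \<rho>) ^ k) * K n)"
proof (rule bilat_summable_laurent1_poly[OF f])
  fix j :: int
  assume "- 1 \<le> j" "j \<le> int N + 1"
  then have "bilat_summable (\<lambda>n. inverse \<rho> powi j * (K n * W n powi j))"
    by (intro bilat_summable_cmult K)
  then show "bilat_summable (\<lambda>n. K n * (W n / \<rho>) powi j)"
    by (simp add: divide_inverse power_int_mult_distrib mult_ac)
qed (use W \<rho> in auto)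

lemma adjoint_telescoping:
  fixes Km Kz Kp W :: "int \<Rightarrow> complex" and a b c P :: "complex \<Rightarrow> complex"
  assumes W: "W (n + 1) = \<rho> * W n" and \<rho>: "\<rho> \<noteq> 0"
    and adjoint: "(c (W n) - E) * P (W n) + a (\<rho> * W n) * P (\<rho> * W n) + b (W n / \<rho>) * P (W n / \<rho>) = 0"
    and kernel: "tm * Km n + tp * Kp n - tz * Kz n
                   = a (W n) * Kz (n - 1) + b (W n) * Kz (n + 1) + c (W n) * Kz n"
  defines "H \<equiv> \<lambda>n. a (W n) * P (W n) * Kz (n - 1) - b (W n / \<rho>) * P (W n / \<rho>) * Kz n"
  shows "tm * (Km n * P (W n)) + tp * (Kp n * P (W n)) - (tz + E) * (Kz n * P (W n)) = H n - H (n + 1)"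
proof -
  have "W (n + 1) / \<rho> = W n"
    using W \<rho> by simp
  then have next_H: "H (n + 1) = a (\<rho> * W n) * P (\<rho> * W n) * Kz n - b (W n) * P (W n) * Kz (n + 1)"
    unfolding H_def W by simp
  have adj: "(c (W n) - E) * P (W n) = - (a (\<rho> * W n) * P (\<rho> * W n) + b (W n / \<rho>) * P (W n / \<rho>))"
    using adjoint by (simp add: algebra_simps add_eq_0_iff2)
  have "tm * (Km n * P (W n)) + tp * (Kp n * P (W n)) - (tz + E) * (Kz n * P (W n))
      = (tm * Km n + tp * Kp n - tz * Kz n) * P (W n) - E * Kz n * P (W n)"
    by (simp add: algebra_simps)
  also have "\<dots> = a (W n) * P (W n) * Kz (n - 1) + b (W n) * P (W n) * Kz (n + 1)
      + ((c (W n) - E) * P (W n)) * Kz n"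
    unfolding kernel by (simp add: algebra_simps)
  finally show ?thesis
    unfolding adj next_H unfolding H_def by (simp add: algebra_simps)
qed

text \<open>The method of Jackson integrals: if the kernel \<open>K\<close> intertwines a three-term
  operator in the variable of the solution with a three-term operator along the lattice
  \<open>W n\<close>, and \<open>P\<close> is an eigenfunction of the adjoint of the latter, then summing
  \<open>K P\<close> over the lattice gives an eigenfunction, the defect being a telescoping sum.\<close>
lemma bilat_sum_kernel_eigen:
  fixes Km Kz Kp W :: "int \<Rightarrow> complex" and a b c P :: "complex \<Rightarrow> complex"
  assumes W: "\<And>n. W (n + 1) = \<rho> * W n" "\<And>n. W n \<noteq> 0" and \<rho>: "\<rho> \<noteq> 0"
    and P: "\<And>w. P w = (\<Sum>k\<le>N. cf k * w ^ k)"
    and laurent: "laurent1 a" "laurent1 b"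
    and adjoint: "\<And>w. w \<noteq> 0 \<Longrightarrow> (c w - E) * P w + a (\<rho> * w) * P (\<rho> * w) + b (w / \<rho>) * P (w / \<rho>) = 0"
    and kernel: "\<And>n. tm * Km n + tp * Kp n - tz * Kz n
                      = a (W n) * Kz (n - 1) + b (W n) * Kz (n + 1) + c (W n) * Kz n"
    and summable: "\<And>K j. K \<in> {Km, Kz, Kp} \<Longrightarrow> - 1 \<le> j \<Longrightarrow> j \<le> int N + 1
                      \<Longrightarrow> bilat_summable (\<lambda>n. K n * W n powi j)"
  shows "bilat_summable (\<lambda>n. Kz n * P (W n))"
    and "tm * bilat_sum (\<lambda>n. Km n * P (W n)) + tp * bilat_sum (\<lambda>n. Kp n * P (W n))
           - tz * bilat_sum (\<lambda>n. Kz n * P (W n)) = E * bilat_sum (\<lambda>n. Kz n * P (W n))"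
proof -
  have summable_poly: "bilat_summable (\<lambda>n. K n * P (W n))" if "K \<in> {Km, Kz, Kp}" for K
    using bilat_summable_laurent1_poly[OF laurent1_const[of 1] W(2) summable[OF that], where cf=cf]
    by (simp add: P mult.commute)
  then show "bilat_summable (\<lambda>n. Kz n * P (W n))"
    by simp
  define H where "H n = a (W n) * P (W n) * Kz (n - 1) - b (W n / \<rho>) * P (W n / \<rho>) * Kz n" for n
  have telescoping: "tm * (Km n * P (W n)) + tp * (Kp n * P (W n)) - (tz + E) * (Kz n * P (W n))
      = H n - H (n + 1)" for n
    using adjoint_telescoping[where W = W and n = n and a = a and b = b and c = c and P = P and Kz = Kz
        and Km = Km and Kp = Kp, OF W(1) \<rho> adjoint[OF W(2)] kernel]
    unfolding H_def by simp
  have "bilat_summable H"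
    unfolding H_def P using summable[of Kz]
    by (intro bilat_summable_diff
        bilat_summable_laurent1_poly_pred[where W = W and \<rho> = \<rho>, OF laurent(1) W]
        bilat_summable_laurent1_poly_div[OF laurent(2) W(2) \<rho>]) auto
  then have "bilat_sum (\<lambda>n. tm * (Km n * P (W n)) + tp * (Kp n * P (W n))
      - (tz + E) * (Kz n * P (W n))) = 0"
    unfolding telescoping by (rule bilat_sum_telescope)
  then show "tm * bilat_sum (\<lambda>n. Km n * P (W n)) + tp * bilat_sum (\<lambda>n. Kp n * P (W n))
      - tz * bilat_sum (\<lambda>n. Kz n * P (W n)) = E * bilat_sum (\<lambda>n. Kz n * P (W n))"
    using summable_poly
    by (simp add: bilat_sum_add bilat_sum_diff bilat_sum_cmult bilat_summable_add
        bilat_summable_diff bilat_summable_cmult algebra_simps)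
qed

section \<open>The polynomial eigenfunction of the adjoint operator\<close>

lemma qpw_add: "qpw Lq (a + b) = qpw Lq a * qpw Lq b"
  by (simp add: qpw_def distrib_right exp_add)

lemma qpw_diff: "qpw Lq (a - b) = qpw Lq a / qpw Lq b"
  by (simp add: qpw_def left_diff_distrib exp_diff)

lemma qpw_minus: "qpw Lq (- a) = 1 / qpw Lq a"
  by (simp add: qpw_def exp_minus field_simps)

lemma qpw_of_nat: "qpw Lq (of_nat n) = exp Lq ^ n"
  by (simp add: qpw_def exp_of_nat_mult)

lemma qpw_nonzero: "qpw Lq a \<noteq> 0"
  by (simp add: qpw_def)

lemma qpw_0: "qpw Lq 0 = 1"
  by (simp add: qpw_def)

lemmas qpw_exp_simps = qpw_def exp_of_nat_mult[symmetric] exp_add[symmetric] exp_diff[symmetric]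

lemma norm_qpw_less_1:
  assumes "cmod (exp Lq) < 1" "e \<in> \<real>" "Re e > 0"
  shows "cmod (qpw Lq e) < 1"
proof -
  have "Re Lq < 0"
    using assms(1) by simp
  moreover have "Im e = 0"
    using assms(2) by (simp add: complex_is_Real_iff)
  ultimately have "Re (e * Lq) < 0"
    using assms(3) by (simp add: mult_pos_neg)
  then show ?thesis
    by (simp add: qpw_def)
qed

locale q_heun =
  fixes Lq t1 t2 h1 h2 l1 l2 a1 a2 b lam1 E0 :: complex and N :: nat
  assumes q_lt1: "cmod (exp Lq) < 1" and t_nz: "t1 \<noteq> 0" "t2 \<noteq> 0"
    and h2_def: "h2 = l2 - 1 - of_nat N"
    and lam1_def: "lam1 = (h1 + h2 - l1 - l2 - a1 - a2 - b + 2) / 2"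
    and real1: "lam1 + b + a1 \<in> \<real>" "Re (lam1 + b + a1) > 1"
    and real2: "lam1 + a2 \<in> \<real>" "Re (lam1 + a2) > 1"
    and root: "cpoly Lq t1 t2 h1 l1 l2 a1 a2 b lam1 N E0 = 0"
begin

abbreviation "q \<equiv> exp Lq"

text \<open>Since \<open>h\<^sub>1\<close> and \<open>h\<^sub>2\<close> are determined by the other parameters, every power of
  \<open>q\<close> below is a monomial in the following independent atoms; identities between
  such powers are proved by expanding them into atoms.\<close>
abbreviation "r \<equiv> qpw Lq (1/2)"
abbreviation "La \<equiv> qpw Lq lam1"
abbreviation "L1 \<equiv> qpw Lq l1"
abbreviation "L2 \<equiv> qpw Lq l2"
abbreviation "P1 \<equiv> qpw Lq a1"
abbreviation "P2 \<equiv> qpw Lq a2"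
abbreviation "Bh \<equiv> qpw Lq (b/2)"
abbreviation "QN \<equiv> exp Lq ^ N"

abbreviation "c k \<equiv> cseq Lq t1 t2 h1 l1 l2 a1 a2 b lam1 N E0 k"
abbreviation "xn k \<equiv> xc Lq t1 t2 h1 l1 l2 a1 a2 b lam1 N k"
abbreviation "yn k \<equiv> yc Lq t1 t2 h1 l1 l2 a1 a2 b lam1 N k"
abbreviation "zn k \<equiv> zc Lq t1 t2 h1 l1 l2 a1 a2 b lam1 N k"

definition "ht1 = qpw Lq (h1 + 1/2) * t1"
definition "ht2 = qpw Lq (h2 + 1/2) * t2"
definition "lt1 = qpw Lq (l1 - 1/2) * t1"
definition "lt2 = qpw Lq (l2 - 1/2) * t2"
definition "Q1 = qpw Lq (lam1 + a1)"
definition "Qb = qpw Lq (lam1 + a1 + b)"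
definition "kappa = qpw Lq ((h1 + h2 + l1 + l2 + a1 + a2) / 2) * (qpw Lq (b/2) + qpw Lq (- b/2))
    * t1 * t2"

lemma h1_eq: "h1 = 2 * lam1 + l1 + a1 + a2 + b - 1 + of_nat N"
  using lam1_def h2_def by (simp add: field_simps)

lemma q_eq: "q = r * r"
  by (simp add: qpw_def exp_add[symmetric])

lemma atoms_nonzero: "La \<noteq> 0" "L1 \<noteq> 0" "L2 \<noteq> 0" "P1 \<noteq> 0" "P2 \<noteq> 0" "Bh \<noteq> 0" "r \<noteq> 0" "QN \<noteq> 0"
  by (auto simp: qpw_nonzero)

lemma ht1_eq: "ht1 = La * La * L1 * P1 * P2 * Bh * Bh * QN * t1 / r"
proof -
  have "h1 + 1/2 = lam1 + lam1 + l1 + a1 + a2 + b/2 + b/2 + of_nat N - 1/2"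
    unfolding h1_eq by (simp add: field_simps)
  then show ?thesis
    unfolding ht1_def by (simp only: qpw_add qpw_diff qpw_of_nat) simp
qed

lemma ht2_eq: "ht2 = L2 * t2 / (r * QN)"
proof -
  have "h2 + 1/2 = l2 - 1/2 - of_nat N"
    unfolding h2_def by (simp add: field_simps)
  then show ?thesis
    unfolding ht2_def by (simp only: qpw_add qpw_diff qpw_of_nat) simp
qed

lemma lt1_eq: "lt1 = L1 * t1 / r"
  unfolding lt1_def qpw_diff by simp

lemma lt2_eq: "lt2 = L2 * t2 / r"
  unfolding lt2_def qpw_diff by simp

lemma Q1_eq: "Q1 = La * P1"
  unfolding Q1_def by (simp only: qpw_add)

lemma Qb_eq: "Qb = La * P1 * Bh * Bh"
proof -
  have "lam1 + a1 + b = lam1 + a1 + b/2 + b/2"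
    by simp
  then show ?thesis
    unfolding Qb_def by (simp only: qpw_add)
qed

lemma kappa_eq: "kappa = La * L1 * L2 * P1 * P2 * (Bh * Bh + 1) * t1 * t2 / (r * r)"
proof -
  have "(h1 + h2 + l1 + l2 + a1 + a2) / 2 = lam1 + l1 + l2 + a1 + a2 + b/2 - 1/2 - 1/2"
    unfolding h1_eq h2_def by (simp add: field_simps)
  then have "qpw Lq ((h1 + h2 + l1 + l2 + a1 + a2) / 2) = La * L1 * L2 * P1 * P2 * Bh / r / r"
    by (simp only: qpw_add qpw_diff)
  then show ?thesis
    unfolding kappa_def using atoms_nonzero by (simp add: qpw_minus field_simps)
qed

lemma params_nonzero: "ht1 \<noteq> 0" "ht2 \<noteq> 0" "lt1 \<noteq> 0" "lt2 \<noteq> 0" "Q1 \<noteq> 0" "Qb \<noteq> 0"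
  using t_nz by (auto simp: ht1_def ht2_def lt1_def lt2_def Q1_def Qb_def qpw_nonzero)

definition "coef_Tm x = (x - ht1) * (x - ht2) / x"
definition "coef_Tp x = qpw Lq (a1 + a2) * (x - lt1) * (x - lt2) / x"
definition "coef_T0 x = (qpw Lq a1 + qpw Lq a2) * x + kappa / x"

lemma A4_eq:
  "A4 Lq t1 t2 h1 h2 l1 l2 a1 a2 b g u
     = coef_Tm (exp u) * g (u - Lq) + coef_Tp (exp u) * g (u + Lq) - coef_T0 (exp u) * g u"
  unfolding A4_def coef_Tm_def coef_Tp_def coef_T0_def ht1_def ht2_def lt1_def lt2_def kappa_def Let_def
  by simp

text \<open>Both kernels transform \<open>A4\<close> into the three-term operator in the lattice
  variable \<open>w\<close> with coefficients \<open>coef_a\<close>, \<open>coef_b\<close>, \<open>coef_c\<close>.\<close>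
definition "coef_a w = - (P2 * Qb) * lt1 * (w / q - lt2) * (1 - Q1 * w / (q * ht1)) / (w / q)"
definition "coef_b w = - (P1 / Qb) * ht1 * (Q1 * w - ht2) * (1 - w / lt1) / (Q1 * w)"
definition "coef_c w = - (P1 + P2 * Q1 / q) * w - (P1 * ht1 * ht2 / Q1 + P2 * q * lt1 * lt2) / w"

definition "Pc w = (\<Sum>k\<le>N. c k * w ^ k)"

lemma laurent1_coef_a: "laurent1 coef_a"
  unfolding laurent1_def coef_a_def using params_nonzero
  by (intro exI[of _ "P2 * Qb * lt1 * lt2 * q"] exI[of _ "- (P2 * Qb * lt1) * (1 + lt2 * Q1 / ht1)"]
      exI[of _ "P2 * Qb * lt1 * Q1 / (q * ht1)"]) (auto simp: field_simps)

lemma laurent1_coef_b: "laurent1 coef_b"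
  unfolding laurent1_def coef_b_def using params_nonzero
  by (intro exI[of _ "(P1 / Qb) * ht1 * ht2 / Q1"]
      exI[of _ "- (P1 / Qb) * ht1 * (1 + ht2 / (Q1 * lt1))"]
      exI[of _ "(P1 / Qb) * ht1 / lt1"]) (auto simp: field_simps)

text \<open>Multiplied by \<open>w\<close>, the adjoint operator maps \<open>w\<^sup>k\<close> to
  \<open>w\<^sup>k (adjX k + adjY k w + adjZ k w\<^sup>2)\<close>, and \<open>adjX\<close>, \<open>adjY\<close>, \<open>adjZ\<close> are
  exactly the coefficients \<open>x\<^sub>k\<close>, \<open>-(E\<^sub>0 + y\<^sub>k\<^sub>+\<^sub>1)\<close>, \<open>z\<^sub>k\<^sub>+\<^sub>2\<close>
  of the recursion defining \<open>c\<^sub>k\<close>.\<close>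
definition "adjX k = - (P1 * ht1 * ht2 / Q1 + P2 * q * lt1 * lt2) + q ^ k * (P2 * Qb * lt1 * lt2)
    + (P1 / Qb) * ht1 * ht2 * q / Q1 / q ^ k"
definition "adjY k = - E0 - q ^ k * P2 * Qb * lt1 * (1 + lt2 * Q1 / ht1)
    - (P1 / Qb) * ht1 * (1 + ht2 / (Q1 * lt1)) / q ^ k"
definition "adjZ k = - (P1 + P2 * Q1 / q) + q ^ k * P2 * Qb * lt1 * Q1 / ht1
    + (P1 / Qb) * ht1 / (q * lt1) / q ^ k"

lemma adjoint_monomial:
  assumes "w \<noteq> 0"
  shows "w * (coef_c w - E0) + w * coef_a (q * w) * q ^ k + w * coef_b (w / q) / q ^ k
           = adjX k + adjY k * w + adjZ k * w\<^sup>2"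
  using assms params_nonzero unfolding coef_a_def coef_b_def coef_c_def adjX_def adjY_def adjZ_def
  by (simp add: field_simps) (simp add: algebra_simps power2_eq_square)

lemma adjX_eq_xc: "adjX k = xn k"
proof -
  have e1: "qpw Lq (- of_nat k + l1 + l2 + a2) = L1 * L2 * P2 / q ^ k"
    by (simp add: qpw_exp_simps field_simps)
  have e2: "qpw Lq (of_nat k - 1 + a1 + lam1 + b) = q ^ k * P1 * La * Bh * Bh / (r * r)"
    by (simp add: qpw_exp_simps field_simps) (rule arg_cong[where f = exp], simp add: field_simps)
  show ?thesis
    unfolding adjX_def xc_def e1 e2 qpw_of_nat ht1_eq ht2_eq lt1_eq lt2_eq Q1_eq Qb_eq
    using atoms_nonzero t_nz by (simp add: field_simps q_eq)
qed

lemma adjY_eq_yc: "adjY k = - (E0 + yn (k + 1))"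
proof -
  have e1: "qpw Lq (1 - of_nat (k + 1) - b) = 1 / (q ^ k * Bh * Bh)"
    by (simp add: qpw_exp_simps exp_minus[symmetric] field_simps)
  have e2: "qpw Lq (of_nat (k + 1) - 1 - of_nat N) = q ^ k / QN"
    by (simp add: qpw_exp_simps field_simps)
  have e3: "qpw Lq (- lam1 + h1 + 1/2) = La * L1 * P1 * P2 * Bh * Bh * QN / r"
    by (simp add: h1_eq qpw_exp_simps field_simps) (rule arg_cong[where f = exp], simp add: field_simps)
  have e4: "qpw Lq (1 - of_nat (k + 1) + a2) = P2 / q ^ k"
    by (simp add: qpw_exp_simps field_simps)
  have e5: "qpw Lq (of_nat (k + 1) - 1 - of_nat N + a1) = q ^ k * P1 / QN"
    by (simp add: qpw_exp_simps field_simps)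
  have e6: "qpw Lq (l2 - 1/2) = L2 / r"
    by (simp only: qpw_diff)
  show ?thesis
    unfolding adjY_def yc_def e1 e2 e3 e4 e5 e6 ht1_eq ht2_eq lt1_eq lt2_eq Q1_eq Qb_eq
    using atoms_nonzero t_nz by (simp add: field_simps q_eq)
qed

lemma adjZ_eq_zc: "adjZ k = zn (k + 2)"
proof -
  have e1: "qpw Lq (of_nat (k + 2) - of_nat N - 2 + a1) = q ^ k * P1 / QN"
    by (simp add: qpw_exp_simps field_simps)
  have e2: "qpw Lq (of_nat N - of_nat (k + 2) + 1 + a2 + lam1) = QN * P2 * La / q ^ k / r / r"
    by (simp add: qpw_exp_simps field_simps) (rule arg_cong[where f = exp], simp add: field_simps)
  have e3: "qpw Lq (of_nat N - of_nat (k + 2) + 2) = QN / q ^ k"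
    by (simp add: qpw_exp_simps field_simps)
  show ?thesis
    unfolding adjZ_def zc_def e1 e2 e3 ht1_eq ht2_eq lt1_eq lt2_eq Q1_eq Qb_eq
    using atoms_nonzero t_nz by (simp add: field_simps q_eq)
qed

lemma xc_nonzero:
  assumes "k \<ge> 1"
  shows "xn k \<noteq> 0"
proof -
  have "cmod (q ^ k) < 1"
    using q_lt1 assms by (simp add: norm_power power_less_one_iff)
  then have "1 - qpw Lq (of_nat k) \<noteq> 0"
    by (auto simp: qpw_of_nat)
  moreover have "cmod (qpw Lq (of_nat k - 1 + a1 + lam1 + b)) < 1"
  proof (rule norm_qpw_less_1[OF q_lt1])
    have "of_nat k - 1 + a1 + lam1 + b = of_real (real k - 1) + (lam1 + b + a1)"
      by simp
    then show "of_nat k - 1 + a1 + lam1 + b \<in> \<real>"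
      using real1(1) by (metis Reals_add Reals_of_real)
    show "Re (of_nat k - 1 + a1 + lam1 + b) > 0"
      using real1(2) assms by simp
  qed
  then have "1 - qpw Lq (of_nat k - 1 + a1 + lam1 + b) \<noteq> 0"
    by auto
  ultimately show ?thesis
    unfolding xc_def using t_nz by (simp add: qpw_nonzero)
qed

definition "c_pred k = (if k = 0 then 0 else c (k - 1))"

lemma cseq_rec: "c (Suc k) * xn (Suc k) = c k * (E0 + yn (Suc k)) - c_pred k * zn (Suc k)"
proof (cases k)
  case 0
  then show ?thesis
    using xc_nonzero[of 1] by (simp add: c_pred_def)
next
  case (Suc m)
  then show ?thesis
    using xc_nonzero[of "m + 2"] by (simp add: c_pred_def numeral_2_eq_2)
qed

lemma c_pred_adjZ: "c_pred M * adjZ (M - 1) = c_pred M * zn (M + 1)"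
  by (cases M) (simp_all add: c_pred_def adjZ_eq_zc)

text \<open>Summing the monomial contributions telescopes because of the recursion for
  \<open>c\<^sub>k\<close>; only the two top terms survive.\<close>
lemma sum_adjoint_monomials:
  "(\<Sum>k\<le>M. c k * w ^ k * (adjX k + adjY k * w + adjZ k * w\<^sup>2))
     = w ^ (M + 1) * (c M * adjY M + c_pred M * adjZ (M - 1)) + w ^ (M + 2) * c M * adjZ M"
proof (induction M)
  case 0
  have "adjX 0 = 0"
    using adjX_eq_xc[of 0] by (simp add: xc_def qpw_0)
  then show ?case
    by (simp add: c_pred_def power2_eq_square algebra_simps)
next
  case (Suc M)
  have "c M * adjY M + c_pred M * adjZ (M - 1) + c (Suc M) * adjX (Suc M) = 0"
    using cseq_rec[of M] unfolding c_pred_adjZ by (simp add: adjX_eq_xc adjY_eq_yc algebra_simps)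
  moreover have "(\<Sum>k\<le>Suc M. c k * w ^ k * (adjX k + adjY k * w + adjZ k * w\<^sup>2))
      = w ^ (M + 1) * (c M * adjY M + c_pred M * adjZ (M - 1) + c (Suc M) * adjX (Suc M))
        + w ^ (Suc M + 1) * (c (Suc M) * adjY (Suc M) + c_pred (Suc M) * adjZ (Suc M - 1))
        + w ^ (Suc M + 2) * c (Suc M) * adjZ (Suc M)"
    using Suc by (simp add: c_pred_def algebra_simps power2_eq_square)
  ultimately show ?case
    by simp
qed

lemma Pc_adjoint:
  assumes "w \<noteq> 0"
  shows "(coef_c w - E0) * Pc w + coef_a (q * w) * Pc (q * w) + coef_b (w / q) * Pc (w / q) = 0"
proof -
  have top: "c N * adjY N + c_pred N * adjZ (N - 1) = 0"
  proof -
    have "(\<Prod>i=1..N. xn i) \<noteq> 0"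
      using xc_nonzero by (auto simp: prod_zero_iff)
    then have "c N * (E0 + yn (N + 1)) - c_pred N * zn (N + 1) = 0"
      using root unfolding cpoly_def c_pred_def by simp
    then show ?thesis
      unfolding c_pred_adjZ by (simp add: adjY_eq_yc algebra_simps)
  qed
  have "w * ((coef_c w - E0) * Pc w + coef_a (q * w) * Pc (q * w) + coef_b (w / q) * Pc (w / q))
      = (\<Sum>k\<le>N. c k * w ^ k
          * (w * (coef_c w - E0) + w * coef_a (q * w) * q ^ k + w * coef_b (w / q) / q ^ k))"
    unfolding Pc_def
    by (simp add: sum_distrib_left sum_distrib_right sum.distrib[symmetric] power_mult_distrib
        power_divide algebra_simps)
  also have "\<dots> = (\<Sum>k\<le>N. c k * w ^ k * (adjX k + adjY k * w + adjZ k * w\<^sup>2))"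
    using adjoint_monomial[OF assms] by simp
  also have "\<dots> = 0"
    unfolding sum_adjoint_monomials top using adjZ_eq_zc[of N] by (simp add: zc_def qpw_0)
  finally show ?thesis
    using assms by simp
qed

section \<open>The kernel of the first solution\<close>

text \<open>For \<open>exp L = \<xi> q\<^sup>n\<close> and \<open>x = exp u\<close>, \<open>kernel1 u L * Pc (exp L)\<close> is the
  \<open>n\<close>-th summand of \<open>g\<^sub>1\<close> up to a factor that does not depend on \<open>n\<close>.\<close>
definition "kernel1 u L = exp (- a1 * u) * qratio q (exp L / lt1) (Q1 * exp L / ht1)
    * qratio q (Q1 * exp (L - u)) (exp (L - u)) * exp ((lam1 + a1 + b) * L)"

definition "generic1 u L \<longleftrightarrow> qgeneric q (exp L / lt1) \<and> qgeneric q (Q1 * exp L / ht1)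
    \<and> qgeneric q (Q1 * exp (L - u)) \<and> qgeneric q (exp (L - u))"

lemma kernel1_shift_u_minus:
  assumes "generic1 u L"
  shows "kernel1 (u - Lq) L = P1 * ((1 - exp (L - u)) / (1 - Q1 * exp (L - u))) * kernel1 u L"
proof -
  have e: "exp (L - (u - Lq)) = exp (L - u) * q"
    by (simp add: exp_add[symmetric] algebra_simps)
  have A: "qratio q (Q1 * exp (L - (u - Lq))) (exp (L - (u - Lq)))
      = (1 - exp (L - u)) / (1 - Q1 * exp (L - u)) * qratio q (Q1 * exp (L - u)) (exp (L - u))"
    unfolding e mult.assoc[symmetric]
    by (rule qratio_mult_q[OF q_lt1]) (use assms in \<open>auto simp: generic1_def dest: qgeneric_neq_1\<close>)
  have B: "exp (- a1 * (u - Lq)) = exp (- a1 * u) * P1"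
    by (simp add: qpw_def right_diff_distrib exp_add[symmetric])
  show ?thesis
    unfolding kernel1_def A B by (simp add: divide_inverse inverse_mult_distrib ac_simps)
qed

lemma kernel1_shift_u_plus:
  "kernel1 (u + Lq) L = (1 - Q1 * exp (L - u) / q) / (1 - exp (L - u) / q) / P1 * kernel1 u L"
proof -
  have e: "exp (L - (u + Lq)) = exp (L - u) / q"
    by (simp add: exp_diff[symmetric] algebra_simps)
  have A: "qratio q (Q1 * exp (L - (u + Lq))) (exp (L - (u + Lq)))
      = (1 - Q1 * exp (L - u) / q) / (1 - exp (L - u) / q)
          * qratio q (Q1 * exp (L - u)) (exp (L - u))"
    unfolding e times_divide_eq_right by (rule qratio_div_q[OF q_lt1]) simp
  have B: "exp (- a1 * (u + Lq)) = exp (- a1 * u) / P1"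
    by (simp add: qpw_def distrib_left exp_diff[symmetric])
  show ?thesis
    unfolding kernel1_def A B by (simp add: divide_inverse inverse_mult_distrib ac_simps)
qed

lemma kernel1_shift_L_minus:
  "kernel1 u (L - Lq) = (1 - exp L / lt1 / q) / (Qb * (1 - Q1 * exp L / ht1 / q))
      * ((1 - Q1 * exp (L - u) / q) / (1 - exp (L - u) / q)) * kernel1 u L"
proof -
  have e: "exp (L - Lq - u) = exp (L - u) / q" "exp (L - Lq) / lt1 = exp L / lt1 / q"
    "Q1 * exp (L - Lq) / ht1 = Q1 * exp L / ht1 / q"
    by (simp_all add: exp_diff)
  have A: "qratio q (exp (L - Lq) / lt1) (Q1 * exp (L - Lq) / ht1)
      = (1 - exp L / lt1 / q) / (1 - Q1 * exp L / ht1 / q)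
          * qratio q (exp L / lt1) (Q1 * exp L / ht1)"
    unfolding e by (rule qratio_div_q[OF q_lt1]) simp
  have B: "qratio q (Q1 * exp (L - Lq - u)) (exp (L - Lq - u))
      = (1 - Q1 * exp (L - u) / q) / (1 - exp (L - u) / q)
          * qratio q (Q1 * exp (L - u)) (exp (L - u))"
    unfolding e times_divide_eq_right by (rule qratio_div_q[OF q_lt1]) simp
  have C: "exp ((lam1 + a1 + b) * (L - Lq)) = exp ((lam1 + a1 + b) * L) / Qb"
    by (simp add: Qb_def qpw_def right_diff_distrib exp_diff)
  show ?thesis
    unfolding kernel1_def A B C by (simp add: divide_inverse inverse_mult_distrib ac_simps)
qed

lemma kernel1_shift_L_plus:
  assumes "generic1 u L"
  shows "kernel1 u (L + Lq) = Qb * (1 - Q1 * exp L / ht1) / (1 - exp L / lt1)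
      * ((1 - exp (L - u)) / (1 - Q1 * exp (L - u))) * kernel1 u L"
proof -
  have e: "exp (L + Lq - u) = exp (L - u) * q" "exp (L + Lq) / lt1 = exp L / lt1 * q"
    "Q1 * exp (L + Lq) / ht1 = Q1 * exp L / ht1 * q"
    by (simp_all add: exp_add exp_diff)
  have A: "qratio q (exp (L + Lq) / lt1) (Q1 * exp (L + Lq) / ht1)
      = (1 - Q1 * exp L / ht1) / (1 - exp L / lt1) * qratio q (exp L / lt1) (Q1 * exp L / ht1)"
    unfolding e
    by (rule qratio_mult_q[OF q_lt1]) (use assms in \<open>auto simp: generic1_def dest: qgeneric_neq_1\<close>)
  have B: "qratio q (Q1 * exp (L + Lq - u)) (exp (L + Lq - u))
      = (1 - exp (L - u)) / (1 - Q1 * exp (L - u)) * qratio q (Q1 * exp (L - u)) (exp (L - u))"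
    unfolding e mult.assoc[symmetric]
    by (rule qratio_mult_q[OF q_lt1]) (use assms in \<open>auto simp: generic1_def dest: qgeneric_neq_1\<close>)
  have C: "exp ((lam1 + a1 + b) * (L + Lq)) = exp ((lam1 + a1 + b) * L) * Qb"
    by (simp add: Qb_def qpw_def distrib_left exp_add)
  show ?thesis
    unfolding kernel1_def A B C by (simp add: divide_inverse inverse_mult_distrib ac_simps)
qed

lemma quadratic_quotient_diff:
  fixes x z s t :: complex
  assumes "x \<noteq> 0" "z \<noteq> 0"
  shows "(x - s) * (x - t) / x - (z - s) * (z - t) / z = (x - z) * (1 - s * t / (x * z))"
  using assms by (simp add: field_simps)

lemma coef_b_factor1:
  assumes "w \<noteq> 0" "1 - w / lt1 \<noteq> 0"
  shows "coef_b w * (Qb * (1 - Q1 * w / ht1) / (1 - w / lt1)) = P1 * coef_Tm (Q1 * w)"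
proof -
  have "lt1 - w \<noteq> 0"
    using assms(2) params_nonzero by (simp add: field_simps)
  then show ?thesis
    unfolding coef_b_def coef_Tm_def using assms params_nonzero by (simp add: field_simps)
qed

lemma coef_a_factor1:
  assumes "w \<noteq> 0" "1 - Q1 * w / ht1 / q \<noteq> 0"
  shows "coef_a w * ((1 - w / lt1 / q) / (Qb * (1 - Q1 * w / ht1 / q))) = coef_Tp (w / q) / P1"
proof -
  have "q * ht1 - Q1 * w \<noteq> 0"
    using assms(2) params_nonzero by (simp add: field_simps)
  then show ?thesis
    unfolding coef_a_def coef_Tp_def qpw_add using assms params_nonzero atoms_nonzero
    by (simp add: field_simps)
qed

text \<open>The difference \<open>coef_Tm x - coef_Tm (Q1 w)\<close> contains the factor \<open>x - Q1 w\<close>, which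
  cancels the pole of the \<open>u\<close>-shift ratio of the kernel; likewise for \<open>coef_Tp\<close> at
  \<open>w / q\<close>.\<close>
lemma coef_T_diff_kernel1:
  assumes x: "x \<noteq> 0" and w: "w \<noteq> 0"
    and d: "1 - Q1 * (w / x) \<noteq> 0" "1 - w / x / q \<noteq> 0"
  shows "(coef_Tm x - coef_Tm (Q1 * w)) * (P1 * ((1 - w / x) / (1 - Q1 * (w / x))))
       + (coef_Tp x - coef_Tp (w / q)) * ((1 - Q1 * (w / x) / q) / (1 - w / x / q) / P1)
       - coef_T0 x = coef_c w"
proof -
  have d': "x - Q1 * w \<noteq> 0" "q * x - w \<noteq> 0"
    using d x by (simp_all add: field_simps)
  have e1: "coef_Tm x - coef_Tm (Q1 * w) = (x - Q1 * w) * (1 - ht1 * ht2 / (x * (Q1 * w)))"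
    unfolding coef_Tm_def by (rule quadratic_quotient_diff) (use x w params_nonzero in auto)
  have e2: "coef_Tp x - coef_Tp (w / q) = P1 * P2 * ((x - w / q) * (1 - lt1 * lt2 / (x * (w / q))))"
  proof -
    have "coef_Tp x - coef_Tp (w / q)
        = P1 * P2 * ((x - lt1) * (x - lt2) / x - (w / q - lt1) * (w / q - lt2) / (w / q))"
      unfolding coef_Tp_def qpw_add by (simp add: field_simps)
    then show ?thesis
      using quadratic_quotient_diff[of x "w / q" lt1 lt2] x w by simp
  qed
  have f1: "(x - Q1 * w) * (1 - ht1 * ht2 / (x * (Q1 * w))) * (P1 * ((1 - w / x) / (1 - Q1 * (w / x))))
      = P1 * (x - w) * (1 - ht1 * ht2 / (x * (Q1 * w)))"
    using d' x by (simp add: field_simps)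
  have f2: "P1 * P2 * ((x - w / q) * (1 - lt1 * lt2 / (x * (w / q))))
        * ((1 - Q1 * (w / x) / q) / (1 - w / x / q) / P1)
      = P2 * (x - Q1 * w / q) * (1 - lt1 * lt2 / (x * (w / q)))"
    using d' x atoms_nonzero by (simp add: field_simps)
  have f3: "P1 * (x - w) * (1 - ht1 * ht2 / (x * (Q1 * w)))
      + P2 * (x - Q1 * w / q) * (1 - lt1 * lt2 / (x * (w / q))) - coef_T0 x = coef_c w"
    unfolding coef_T0_def coef_c_def kappa_eq ht1_eq ht2_eq lt1_eq lt2_eq Q1_eq q_eq
    using atoms_nonzero t_nz x w by (simp add: field_simps)
  show ?thesis
    unfolding e1 e2 f1 f2 f3 ..
qed

lemma kernel1_qdiff:
  assumes gen: "generic1 u L"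
  shows "coef_Tm (exp u) * kernel1 (u - Lq) L + coef_Tp (exp u) * kernel1 (u + Lq) L
           - coef_T0 (exp u) * kernel1 u L
         = coef_a (exp L) * kernel1 u (L - Lq) + coef_b (exp L) * kernel1 u (L + Lq)
           + coef_c (exp L) * kernel1 u L"
proof -
  define x w where "x = exp u" and "w = exp L"
  have x: "x \<noteq> 0" and w: "w \<noteq> 0" and e: "exp (L - u) = w / x"
    by (simp_all add: x_def w_def exp_diff)
  have g: "qgeneric q (w / lt1)" "qgeneric q (Q1 * w / ht1)" "qgeneric q (Q1 * (w / x))"
    "qgeneric q (w / x)"
    using gen unfolding generic1_def e w_def by auto
  have d: "1 - Q1 * (w / x) \<noteq> 0" "1 - w / x / q \<noteq> 0" "1 - w / lt1 \<noteq> 0" "1 - Q1 * w / ht1 / q \<noteq> 0"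
    using qgeneric_neq_1[OF g(3)] qgeneric_neq_1[OF qgeneric_div_q[OF g(4)]]
      qgeneric_neq_1[OF g(1)] qgeneric_neq_1[OF qgeneric_div_q[OF g(2)]] by auto
  define Rm Rp Fa Fb where "Rm = (1 - w / x) / (1 - Q1 * (w / x))"
    and "Rp = (1 - Q1 * (w / x) / q) / (1 - w / x / q)"
    and "Fa = (1 - w / lt1 / q) / (Qb * (1 - Q1 * w / ht1 / q))"
    and "Fb = Qb * (1 - Q1 * w / ht1) / (1 - w / lt1)"
  have a: "coef_a w * Fa = coef_Tp (w / q) / P1" and b: "coef_b w * Fb = P1 * coef_Tm (Q1 * w)"
    and c: "(coef_Tm x - coef_Tm (Q1 * w)) * (P1 * Rm) + (coef_Tp x - coef_Tp (w / q)) * (Rp / P1)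
       - coef_T0 x = coef_c w"
    using coef_a_factor1[OF w d(4)] coef_b_factor1[OF w d(3)] coef_T_diff_kernel1[OF x w d(1,2)]
    unfolding Rm_def Rp_def Fa_def Fb_def by simp_all
  have "coef_a w * (Fa * Rp * kernel1 u L) + coef_b w * (Fb * Rm * kernel1 u L)
        + coef_c w * kernel1 u L
      = (coef_a w * Fa) * (Rp * kernel1 u L) + (coef_b w * Fb) * (Rm * kernel1 u L)
        + coef_c w * kernel1 u L"
    by (simp add: ac_simps)
  also have "\<dots> = coef_Tm x * (P1 * Rm * kernel1 u L) + coef_Tp x * (Rp / P1 * kernel1 u L)
      - coef_T0 x * kernel1 u L"
    unfolding a b c[symmetric] using atoms_nonzero by (simp add: field_simps)
  finally show ?thesis
    unfolding kernel1_shift_u_minus[OF gen] kernel1_shift_u_plus kernel1_shift_L_minus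
      kernel1_shift_L_plus[OF gen] e x_def[symmetric] w_def[symmetric]
      Rm_def[symmetric] Rp_def[symmetric] Fa_def[symmetric] Fb_def[symmetric]
    by (simp add: ac_simps)
qed

text \<open>The two convergence exponents \<open>\<lambda>\<^sub>2 + \<alpha>\<^sub>1\<close> and \<open>\<lambda>\<^sub>1 + \<alpha>\<^sub>2 + N\<close> add up to
  \<open>h\<^sub>1 - l\<^sub>1 + 1\<close>; this is where the constraint on \<open>h\<^sub>2\<close> and the definition of
  \<open>\<lambda>\<^sub>1\<close> enter the convergence of both series.\<close>
lemma ht1_div_lt1:
  "ht1 / lt1 = qpw Lq (lam1 + a1 + b + of_int j) * qpw Lq (lam1 + a2 + of_nat N - of_int j)"
proof -
  have "(h1 + 1/2) - (l1 - 1/2) = (lam1 + a1 + b + of_int j) + (lam1 + a2 + of_nat N - of_int j)"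
    unfolding h1_eq by (simp add: algebra_simps)
  then have "qpw Lq (h1 + 1/2) / qpw Lq (l1 - 1/2)
      = qpw Lq (lam1 + a1 + b + of_int j) * qpw Lq (lam1 + a2 + of_nat N - of_int j)"
    by (metis qpw_add qpw_diff)
  then show ?thesis
    unfolding ht1_def lt1_def using t_nz by simp
qed

lemma norm_qpw_lam2_a1_less_1:
  assumes "- 1 \<le> j"
  shows "cmod (qpw Lq (lam1 + a1 + b + of_int j)) < 1"
proof (rule norm_qpw_less_1[OF q_lt1])
  show "lam1 + a1 + b + of_int j \<in> \<real>"
    using Reals_add[OF real1(1) Reals_of_int[of j]] by (simp add: add_ac)
  show "Re (lam1 + a1 + b + of_int j) > 0"
    using real1(2) assms by simp
qed

lemma norm_qpw_lam1_a2_less_1: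
  assumes "j \<le> int N + 1"
  shows "cmod (qpw Lq (lam1 + a2 + of_nat N - of_int j)) < 1"
  using real2 assms by (intro norm_qpw_less_1[OF q_lt1]) auto

lemma qgeneric_lattice:
  assumes "qgeneric q a"
  shows "qgeneric q (a * exp (of_int n * Lq))"
  using qgeneric_mult_powi[OF assms] by (simp add: exp_power_int)

lemma bilat_summable_kernel1:
  assumes gen: "generic1 u L0" and j: "- 1 \<le> j" "j \<le> int N + 1"
  shows "bilat_summable (\<lambda>n. kernel1 u (L0 + of_int n * Lq) * exp (L0 + of_int n * Lq) powi j)"
proof -
  define A1 B1 A2 B2 where "A1 = exp L0 / lt1" and "B1 = Q1 * exp L0 / ht1"
    and "A2 = Q1 * exp (L0 - u)" and "B2 = exp (L0 - u)"
  define z where "z = qpw Lq (lam1 + a1 + b + of_int j)"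
  have "kernel1 u (L0 + of_int n * Lq) * exp (L0 + of_int n * Lq) powi j
      = exp (- a1 * u) * exp ((lam1 + a1 + b + of_int j) * L0)
        * (qratio q (A1 * q powi n) (B1 * q powi n) * qratio q (A2 * q powi n) (B2 * q powi n)
           * z powi n)"
    for n
    unfolding kernel1_def A1_def B1_def A2_def B2_def z_def qpw_def exp_power_int
    by (simp add: exp_add exp_diff algebra_simps)
  moreover have "bilat_summable (\<lambda>n. qratio q (A1 * q powi n) (B1 * q powi n)
      * qratio q (A2 * q powi n) (B2 * q powi n) * z powi n)"
  proof (rule bilat_summable_qratio_geometric[OF q_lt1])
    show "qgeneric q A1" "qgeneric q A2" "qgeneric q B1" "qgeneric q B2"
      using gen unfolding generic1_def A1_def A2_def B1_def B2_def by auto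
    show "A1 \<noteq> 0" "A2 \<noteq> 0" "B1 \<noteq> 0" "B2 \<noteq> 0" "z \<noteq> 0"
      unfolding A1_def A2_def B1_def B2_def z_def using params_nonzero by (simp_all add: qpw_nonzero)
    show "cmod z < 1"
      unfolding z_def by (rule norm_qpw_lam2_a1_less_1[OF j(1)])
    have "A1 * A2 / (B1 * B2) = ht1 / lt1"
      unfolding A1_def A2_def B1_def B2_def using params_nonzero by (simp add: field_simps)
    then show "cmod (A1 * A2 / (B1 * B2) / z) < 1"
      using norm_qpw_lam1_a2_less_1[OF j(2)] unfolding ht1_div_lt1[of j] z_def
      by (simp add: qpw_nonzero)
  qed simp
  ultimately show ?thesis
    by (simp add: bilat_summable_cmult)
qed

lemma generic1_lattice:
  assumes "generic1 u L"
  shows "generic1 u (L + of_int n * Lq)"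
proof -
  have e: "exp (L + of_int n * Lq) / lt1 = exp L / lt1 * exp (of_int n * Lq)"
    "Q1 * exp (L + of_int n * Lq) / ht1 = Q1 * exp L / ht1 * exp (of_int n * Lq)"
    "exp (L + of_int n * Lq - u) = exp (L - u) * exp (of_int n * Lq)"
    by (simp_all add: exp_add exp_diff)
  show ?thesis
    using assms unfolding generic1_def e mult.assoc[symmetric] by (blast intro: qgeneric_lattice)
qed

lemma generic1_shift_u:
  assumes "generic1 u L"
  shows "generic1 (u - Lq) L" "generic1 (u + Lq) L"
proof -
  have "exp (L - (u - Lq)) = exp (L - u) * q" "exp (L - (u + Lq)) = exp (L - u) / q"
    by (simp_all add: exp_add[symmetric] exp_diff[symmetric] algebra_simps)
  then show "generic1 (u - Lq) L" "generic1 (u + Lq) L"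
    using assms unfolding generic1_def
    by (auto simp: mult.assoc[symmetric] times_divide_eq_right intro!: qgeneric_mult_q qgeneric_div_q)
qed

definition "jackson1 u L0
    = bilat_sum (\<lambda>n. kernel1 u (L0 + of_int n * Lq) * Pc (exp (L0 + of_int n * Lq)))"

lemma jackson1_eigen:
  assumes gen: "generic1 u L0"
  shows "bilat_summable (\<lambda>n. kernel1 u (L0 + of_int n * Lq) * Pc (exp (L0 + of_int n * Lq)))"
    and "coef_Tm (exp u) * jackson1 (u - Lq) L0 + coef_Tp (exp u) * jackson1 (u + Lq) L0
           - coef_T0 (exp u) * jackson1 u L0 = E0 * jackson1 u L0"
proof -
  note eigen = bilat_sum_kernel_eigen[where W = "\<lambda>n. exp (L0 + of_int n * Lq)" and \<rho> = q and P = Pc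
      and cf = c and a = coef_a and b = coef_b and c = coef_c and E = E0
      and Km = "\<lambda>n. kernel1 (u - Lq) (L0 + of_int n * Lq)" and Kz = "\<lambda>n. kernel1 u (L0 + of_int n * Lq)"
      and Kp = "\<lambda>n. kernel1 (u + Lq) (L0 + of_int n * Lq)"]
  have prems: "exp (L0 + of_int (n + 1) * Lq) = q * exp (L0 + of_int n * Lq)"
    "coef_Tm (exp u) * kernel1 (u - Lq) (L0 + of_int n * Lq)
       + coef_Tp (exp u) * kernel1 (u + Lq) (L0 + of_int n * Lq)
       - coef_T0 (exp u) * kernel1 u (L0 + of_int n * Lq)
     = coef_a (exp (L0 + of_int n * Lq)) * kernel1 u (L0 + of_int (n - 1) * Lq)
       + coef_b (exp (L0 + of_int n * Lq)) * kernel1 u (L0 + of_int (n + 1) * Lq)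
       + coef_c (exp (L0 + of_int n * Lq)) * kernel1 u (L0 + of_int n * Lq)" for n
    using kernel1_qdiff[OF generic1_lattice[OF gen, of n]]
    by (simp_all add: exp_add algebra_simps)
  have summable: "bilat_summable (\<lambda>n. K n * exp (L0 + of_int n * Lq) powi j)"
    if "K \<in> {\<lambda>n. kernel1 (u - Lq) (L0 + of_int n * Lq), \<lambda>n. kernel1 u (L0 + of_int n * Lq),
              \<lambda>n. kernel1 (u + Lq) (L0 + of_int n * Lq)}" "- 1 \<le> j" "j \<le> int N + 1" for K j
    using that generic1_shift_u[OF gen] gen by (auto intro: bilat_summable_kernel1)
  show "bilat_summable (\<lambda>n. kernel1 u (L0 + of_int n * Lq) * Pc (exp (L0 + of_int n * Lq)))"
    by (rule eigen(1)[OF prems(1) _ _ _ laurent1_coef_a laurent1_coef_b Pc_adjoint prems(2) summable])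
      (auto simp: Pc_def)
  show "coef_Tm (exp u) * jackson1 (u - Lq) L0 + coef_Tp (exp u) * jackson1 (u + Lq) L0
           - coef_T0 (exp u) * jackson1 u L0 = E0 * jackson1 u L0"
    unfolding jackson1_def
    by (rule eigen(2)[OF prems(1) _ _ _ laurent1_coef_a laurent1_coef_b Pc_adjoint prems(2) summable])
      (auto simp: Pc_def)
qed

lemma jackson1_lattice:
  assumes "generic1 u L0"
  shows "jackson1 u (L0 + of_int d * Lq) = jackson1 u L0"
  using bilat_sum_shift[OF jackson1_eigen(1)[OF assms], of d]
  unfolding jackson1_def by (simp add: algebra_simps)

lemma g1_args:
  "qpw Lq (- l1 + 1/2) * exp L0 / t1 = exp L0 / lt1"
  "qpw Lq (lam1 + a1) * exp L0 / exp u = Q1 * exp (L0 - u)"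
  "qpw Lq (lam1 - h1 + a1 - 1/2) * exp L0 / t1 = Q1 * exp L0 / ht1"
  "exp L0 / exp u = exp (L0 - u)"
proof -
  have "qpw Lq (- l1 + 1/2) = 1 / qpw Lq (l1 - 1/2)"
    by (simp add: qpw_minus[symmetric])
  moreover have "qpw Lq (lam1 - h1 + a1 - 1/2) = qpw Lq (lam1 + a1) / qpw Lq (h1 + 1/2)"
    by (simp add: qpw_diff[symmetric] algebra_simps)
  ultimately show "qpw Lq (- l1 + 1/2) * exp L0 / t1 = exp L0 / lt1"
    "qpw Lq (lam1 + a1) * exp L0 / exp u = Q1 * exp (L0 - u)"
    "qpw Lq (lam1 - h1 + a1 - 1/2) * exp L0 / t1 = Q1 * exp L0 / ht1" "exp L0 / exp u = exp (L0 - u)"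
    unfolding lt1_def ht1_def Q1_def by (simp_all add: exp_diff)
qed

lemma g1_term_eq_kernel1:
  fixes Lxi :: "complex \<Rightarrow> complex" and u :: complex and n :: int
  defines "L0 \<equiv> Lxi u"
  shows "g1_term Lq t1 t2 h1 l1 l2 a1 a2 b lam1 N Lxi E0 u n
      = qratio q (Q1 * exp L0 / ht1) (exp L0 / lt1) * qratio q (exp (L0 - u)) (Q1 * exp (L0 - u))
        * exp (a1 * u) * (kernel1 u (L0 + of_int n * Lq) * Pc (exp (L0 + of_int n * Lq)))"
proof -
  define A1 B1 A2 B2 where "A1 = exp L0 / lt1" and "B1 = Q1 * exp L0 / ht1"
    and "A2 = Q1 * exp (L0 - u)" and "B2 = exp (L0 - u)"
  have sum: "(\<Sum>k = 0..N. qpw Lq ((lam1 + a1 + b + of_nat k) * of_int n)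
        * exp ((lam1 + a1 + b + of_nat k) * L0) * c k)
      = exp ((lam1 + a1 + b) * (L0 + of_int n * Lq)) * Pc (exp (L0 + of_int n * Lq))"
    unfolding Pc_def sum_distrib_left atLeast0AtMost
    by (intro sum.cong refl)
      (simp add: qpw_def exp_of_nat_mult[symmetric] exp_add[symmetric] algebra_simps)
  have poch: "qpoch q B1 n * qpoch q B2 n / (qpoch q A1 n * qpoch q A2 n)
      = qratio q B1 A1 * qratio q B2 A2
        * (qratio q (A1 * q powi n) (B1 * q powi n) * qratio q (A2 * q powi n) (B2 * q powi n))"
    unfolding times_divide_times_eq[symmetric] qpoch_div_qpoch by (simp add: ac_simps)
  have "kernel1 u (L0 + of_int n * Lq) = exp (- a1 * u)
      * (qratio q (A1 * q powi n) (B1 * q powi n) * qratio q (A2 * q powi n) (B2 * q powi n))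
      * exp ((lam1 + a1 + b) * (L0 + of_int n * Lq))"
    unfolding kernel1_def A1_def B1_def A2_def B2_def exp_power_int
    by (simp add: exp_add exp_diff ac_simps)
  then show ?thesis
    using poch unfolding g1_term_def Let_def L0_def[symmetric] g1_args sum A1_def B1_def A2_def B2_def
    by (simp add: exp_minus field_simps)
qed

lemma g1_eq_jackson1:
  fixes Lxi :: "complex \<Rightarrow> complex"
  assumes gen: "generic1 u (Lxi u)"
  shows "bilat_summable (g1_term Lq t1 t2 h1 l1 l2 a1 a2 b lam1 N Lxi E0 u)"
    and "g1 Lq t1 t2 h1 l1 l2 a1 a2 b lam1 N Lxi E0 u = (1 - q) * jackson1 u (Lxi u)"
proof -
  define L0 where "L0 = Lxi u"
  define A1 B1 A2 B2 where "A1 = exp L0 / lt1" and "B1 = Q1 * exp L0 / ht1"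
    and "A2 = Q1 * exp (L0 - u)" and "B2 = exp (L0 - u)"
  have g: "qgeneric q A1" "qgeneric q B1" "qgeneric q A2" "qgeneric q B2"
    using gen unfolding generic1_def A1_def B1_def A2_def B2_def L0_def by auto
  note g1_term_eq = g1_term_eq_kernel1[of Lxi u, folded L0_def, folded A1_def B1_def A2_def B2_def]
  note summable = jackson1_eigen(1)[OF gen, folded L0_def]
  show "bilat_summable (g1_term Lq t1 t2 h1 l1 l2 a1 a2 b lam1 N Lxi E0 u)"
    unfolding g1_term_eq by (rule bilat_summable_cmult[OF summable])
  have "g1 Lq t1 t2 h1 l1 l2 a1 a2 b lam1 N Lxi E0 u
      = (1 - q) * exp (- a1 * u) * (qratio q A1 B1 * qratio q A2 B2)
        * bilat_sum (g1_term Lq t1 t2 h1 l1 l2 a1 a2 b lam1 N Lxi E0 u)"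
    unfolding g1_def Let_def L0_def[symmetric] g1_args qratio_def A1_def B1_def A2_def B2_def
    by (simp add: field_simps)
  also have "\<dots> = (1 - q) * (qratio q A1 B1 * qratio q B1 A1) * (qratio q A2 B2 * qratio q B2 A2)
      * jackson1 u L0"
    unfolding g1_term_eq bilat_sum_cmult[OF summable] jackson1_def by (simp add: exp_minus field_simps)
  finally show "g1 Lq t1 t2 h1 l1 l2 a1 a2 b lam1 N Lxi E0 u = (1 - q) * jackson1 u (Lxi u)"
    unfolding qratio_inverse[OF q_lt1 g(1,2)] qratio_inverse[OF q_lt1 g(3,4)] L0_def by simp
qed

section \<open>The kernel of the second solution\<close>

text \<open>Here the lattice variable is \<open>exp L = q\<^sup>n / \<xi>\<close> and the polynomial is evaluated
  at \<open>1 / exp L\<close>.\<close>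
definition "Qe2 = qpw Lq (lam1 + a2 + of_nat N)"

definition "kernel2 u L = exp (lam1 * u) * qratio q (q * ht1 * exp L / Q1) (q * lt1 * exp L)
    * qratio q (q * exp (u + L)) (q * exp (u + L) / Q1) * exp ((lam1 + a2 + of_nat N) * L)"

definition "generic2 u L \<longleftrightarrow> qgeneric q (q * ht1 * exp L / Q1) \<and> qgeneric q (q * lt1 * exp L)
    \<and> qgeneric q (q * exp (u + L)) \<and> qgeneric q (q * exp (u + L) / Q1)"

lemma kernel2_shift_u_minus:
  "kernel2 (u - Lq) L = (1 - exp (u + L)) / (1 - exp (u + L) / Q1) / La * kernel2 u L"
proof -
  have "qratio q (q * exp (u - Lq + L)) (q * exp (u - Lq + L) / Q1)
      = qratio q (q * exp (u + L) / q) (q * exp (u + L) / Q1 / q)"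
    by (simp add: exp_add exp_diff field_simps)
  also have "\<dots> = (1 - exp (u + L)) / (1 - exp (u + L) / Q1)
      * qratio q (q * exp (u + L)) (q * exp (u + L) / Q1)"
    using qratio_div_q[OF q_lt1 exp_not_eq_zero, of "q * exp (u + L)" "q * exp (u + L) / Q1"] by simp
  finally have A: "qratio q (q * exp (u - Lq + L)) (q * exp (u - Lq + L) / Q1)
      = (1 - exp (u + L)) / (1 - exp (u + L) / Q1)
          * qratio q (q * exp (u + L)) (q * exp (u + L) / Q1)" .
  have B: "exp (lam1 * (u - Lq)) = exp (lam1 * u) / La"
    by (simp add: qpw_def right_diff_distrib exp_diff)
  show ?thesis
    unfolding kernel2_def A B by (simp add: divide_inverse inverse_mult_distrib ac_simps)
qed

lemma kernel2_shift_u_plus: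
  assumes "generic2 u L"
  shows "kernel2 (u + Lq) L = La * ((1 - q * exp (u + L) / Q1) / (1 - q * exp (u + L))) * kernel2 u L"
proof -
  have "qratio q (q * exp (u + Lq + L)) (q * exp (u + Lq + L) / Q1)
      = qratio q (q * exp (u + L) * q) (q * exp (u + L) / Q1 * q)"
    by (simp add: exp_add field_simps)
  also have "\<dots> = (1 - q * exp (u + L) / Q1) / (1 - q * exp (u + L))
      * qratio q (q * exp (u + L)) (q * exp (u + L) / Q1)"
    by (rule qratio_mult_q[OF q_lt1]) (use assms in \<open>auto simp: generic2_def dest: qgeneric_neq_1\<close>)
  finally have A: "qratio q (q * exp (u + Lq + L)) (q * exp (u + Lq + L) / Q1)
      = (1 - q * exp (u + L) / Q1) / (1 - q * exp (u + L))
          * qratio q (q * exp (u + L)) (q * exp (u + L) / Q1)" .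
  have B: "exp (lam1 * (u + Lq)) = exp (lam1 * u) * La"
    by (simp add: qpw_def distrib_left exp_add)
  show ?thesis
    unfolding kernel2_def A B by (simp add: divide_inverse inverse_mult_distrib ac_simps)
qed

lemma kernel2_shift_L_minus:
  "kernel2 u (L - Lq) = (1 - ht1 * exp L / Q1) / (Qe2 * (1 - lt1 * exp L))
      * ((1 - exp (u + L)) / (1 - exp (u + L) / Q1)) * kernel2 u L"
proof -
  have "qratio q (q * ht1 * exp (L - Lq) / Q1) (q * lt1 * exp (L - Lq))
      = qratio q (q * ht1 * exp L / Q1 / q) (q * lt1 * exp L / q)"
    by (simp add: exp_diff field_simps)
  also have "\<dots> = (1 - ht1 * exp L / Q1) / (1 - lt1 * exp L)
      * qratio q (q * ht1 * exp L / Q1) (q * lt1 * exp L)"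
    using qratio_div_q[OF q_lt1 exp_not_eq_zero, of "q * ht1 * exp L / Q1" "q * lt1 * exp L"] by simp
  finally have A: "qratio q (q * ht1 * exp (L - Lq) / Q1) (q * lt1 * exp (L - Lq))
      = (1 - ht1 * exp L / Q1) / (1 - lt1 * exp L)
          * qratio q (q * ht1 * exp L / Q1) (q * lt1 * exp L)" .
  have "qratio q (q * exp (u + (L - Lq))) (q * exp (u + (L - Lq)) / Q1)
      = qratio q (q * exp (u + L) / q) (q * exp (u + L) / Q1 / q)"
    by (simp add: exp_add exp_diff field_simps)
  also have "\<dots> = (1 - exp (u + L)) / (1 - exp (u + L) / Q1)
      * qratio q (q * exp (u + L)) (q * exp (u + L) / Q1)"
    using qratio_div_q[OF q_lt1 exp_not_eq_zero, of "q * exp (u + L)" "q * exp (u + L) / Q1"] by simp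
  finally have B: "qratio q (q * exp (u + (L - Lq))) (q * exp (u + (L - Lq)) / Q1)
      = (1 - exp (u + L)) / (1 - exp (u + L) / Q1)
          * qratio q (q * exp (u + L)) (q * exp (u + L) / Q1)" .
  have C: "exp ((lam1 + a2 + of_nat N) * (L - Lq)) = exp ((lam1 + a2 + of_nat N) * L) / Qe2"
    by (simp add: Qe2_def qpw_def right_diff_distrib exp_diff)
  show ?thesis
    unfolding kernel2_def A B C by (simp add: divide_inverse inverse_mult_distrib ac_simps)
qed

lemma kernel2_shift_L_plus:
  assumes "generic2 u L"
  shows "kernel2 u (L + Lq) = Qe2 * (1 - q * lt1 * exp L) / (1 - q * ht1 * exp L / Q1)
      * ((1 - q * exp (u + L) / Q1) / (1 - q * exp (u + L))) * kernel2 u L"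
proof -
  have "qratio q (q * ht1 * exp (L + Lq) / Q1) (q * lt1 * exp (L + Lq))
      = qratio q (q * ht1 * exp L / Q1 * q) (q * lt1 * exp L * q)"
    by (simp add: exp_add field_simps)
  also have "\<dots> = (1 - q * lt1 * exp L) / (1 - q * ht1 * exp L / Q1)
      * qratio q (q * ht1 * exp L / Q1) (q * lt1 * exp L)"
    by (rule qratio_mult_q[OF q_lt1]) (use assms in \<open>auto simp: generic2_def dest: qgeneric_neq_1\<close>)
  finally have A: "qratio q (q * ht1 * exp (L + Lq) / Q1) (q * lt1 * exp (L + Lq))
      = (1 - q * lt1 * exp L) / (1 - q * ht1 * exp L / Q1)
          * qratio q (q * ht1 * exp L / Q1) (q * lt1 * exp L)" .
  have "qratio q (q * exp (u + (L + Lq))) (q * exp (u + (L + Lq)) / Q1)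
      = qratio q (q * exp (u + L) * q) (q * exp (u + L) / Q1 * q)"
    by (simp add: exp_add field_simps)
  also have "\<dots> = (1 - q * exp (u + L) / Q1) / (1 - q * exp (u + L))
      * qratio q (q * exp (u + L)) (q * exp (u + L) / Q1)"
    by (rule qratio_mult_q[OF q_lt1]) (use assms in \<open>auto simp: generic2_def dest: qgeneric_neq_1\<close>)
  finally have B: "qratio q (q * exp (u + (L + Lq))) (q * exp (u + (L + Lq)) / Q1)
      = (1 - q * exp (u + L) / Q1) / (1 - q * exp (u + L))
          * qratio q (q * exp (u + L)) (q * exp (u + L) / Q1)" .
  have C: "exp ((lam1 + a2 + of_nat N) * (L + Lq)) = exp ((lam1 + a2 + of_nat N) * L) * Qe2"
    by (simp add: Qe2_def qpw_def distrib_left exp_add)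
  show ?thesis
    unfolding kernel2_def A B C by (simp add: divide_inverse inverse_mult_distrib ac_simps)
qed

lemma Qe2_eq: "Qe2 = La * P2 * QN"
  unfolding Qe2_def by (simp only: qpw_add qpw_of_nat)

lemma coef_b_factor2:
  assumes "s \<noteq> 0" "1 - lt1 * s \<noteq> 0"
  shows "coef_b (1 / s) * ((1 - ht1 * s / Q1) / (Qe2 * (1 - lt1 * s))) = coef_Tm (Q1 / s) / La"
  using assms params_nonzero atoms_nonzero t_nz
  unfolding coef_b_def coef_Tm_def ht1_eq ht2_eq lt1_eq Q1_eq Qb_eq Qe2_eq
  by (simp add: field_simps)

lemma coef_a_factor2:
  assumes "s \<noteq> 0" "1 - q * ht1 * s / Q1 \<noteq> 0"
  shows "coef_a (1 / s) * (Qe2 * (1 - q * lt1 * s) / (1 - q * ht1 * s / Q1))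
      = coef_Tp (1 / (q * s)) * La"
proof -
  have "Q1 - q * ht1 * s \<noteq> 0"
    using assms(2) params_nonzero by (simp add: field_simps)
  then show ?thesis
    using assms params_nonzero atoms_nonzero t_nz
    unfolding coef_a_def coef_Tp_def qpw_add ht1_eq ht2_eq lt1_eq lt2_eq Q1_eq Qb_eq Qe2_eq
    by (simp add: field_simps)
qed

lemma coef_T_diff_kernel2:
  assumes x: "x \<noteq> 0" and s: "s \<noteq> 0"
    and d: "1 - x * s / Q1 \<noteq> 0" "1 - q * (x * s) \<noteq> 0"
  shows "(coef_Tm x - coef_Tm (Q1 / s)) * ((1 - x * s) / (1 - x * s / Q1) / La)
       + (coef_Tp x - coef_Tp (1 / (q * s))) * (La * ((1 - q * (x * s) / Q1) / (1 - q * (x * s))))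
       - coef_T0 x = coef_c (1 / s)"
proof -
  have d': "x - Q1 / s \<noteq> 0" "x - 1 / (q * s) \<noteq> 0"
    using d x s params_nonzero by (auto simp: field_simps)
  have e1: "coef_Tm x - coef_Tm (Q1 / s) = (x - Q1 / s) * (1 - ht1 * ht2 / (x * (Q1 / s)))"
    unfolding coef_Tm_def by (rule quadratic_quotient_diff) (use x s params_nonzero in auto)
  have e2: "coef_Tp x - coef_Tp (1 / (q * s))
      = P1 * P2 * ((x - 1 / (q * s)) * (1 - lt1 * lt2 / (x * (1 / (q * s)))))"
  proof -
    have "coef_Tp x - coef_Tp (1 / (q * s)) = P1 * P2 * ((x - lt1) * (x - lt2) / x
        - (1 / (q * s) - lt1) * (1 / (q * s) - lt2) / (1 / (q * s)))"
      unfolding coef_Tp_def qpw_add by (simp add: field_simps)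
    then show ?thesis
      using quadratic_quotient_diff[of x "1 / (q * s)" lt1 lt2] x s by simp
  qed
  have f1: "(x - Q1 / s) * (1 - ht1 * ht2 / (x * (Q1 / s))) * ((1 - x * s) / (1 - x * s / Q1) / La)
      = - (Q1 / (La * s)) * (1 - x * s) * (1 - ht1 * ht2 / (x * (Q1 / s)))"
    using d' d x s params_nonzero atoms_nonzero by (simp add: field_simps)
  have f2: "P1 * P2 * ((x - 1 / (q * s)) * (1 - lt1 * lt2 / (x * (1 / (q * s)))))
        * (La * ((1 - q * (x * s) / Q1) / (1 - q * (x * s))))
      = - (La * P1 * P2 / (q * s)) * (1 - q * (x * s) / Q1) * (1 - lt1 * lt2 / (x * (1 / (q * s))))"
    using d' d x s atoms_nonzero params_nonzero by (simp add: field_simps)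
  have f3: "- (Q1 / (La * s)) * (1 - x * s) * (1 - ht1 * ht2 / (x * (Q1 / s)))
      + - (La * P1 * P2 / (q * s)) * (1 - q * (x * s) / Q1) * (1 - lt1 * lt2 / (x * (1 / (q * s))))
      - coef_T0 x = coef_c (1 / s)"
    unfolding coef_T0_def coef_c_def kappa_eq ht1_eq ht2_eq lt1_eq lt2_eq Q1_eq q_eq
    using atoms_nonzero t_nz x s by (simp add: field_simps)
  show ?thesis
    unfolding e1 e2 f1 f2 f3 ..
qed

lemma kernel2_qdiff:
  assumes gen: "generic2 u L"
  shows "coef_Tm (exp u) * kernel2 (u - Lq) L + coef_Tp (exp u) * kernel2 (u + Lq) L
           - coef_T0 (exp u) * kernel2 u L
         = coef_b (1 / exp L) * kernel2 u (L - Lq) + coef_a (1 / exp L) * kernel2 u (L + Lq)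
           + coef_c (1 / exp L) * kernel2 u L"
proof -
  define x s where "x = exp u" and "s = exp L"
  have x: "x \<noteq> 0" and s: "s \<noteq> 0" and y: "exp (u + L) = x * s"
    by (simp_all add: x_def s_def exp_add)
  have g: "qgeneric q (q * ht1 * s / Q1)" "qgeneric q (q * lt1 * s)" "qgeneric q (q * (x * s))"
    "qgeneric q (q * (x * s) / Q1)"
    using gen unfolding generic2_def y s_def by auto
  have d: "1 - x * s / Q1 \<noteq> 0" "1 - q * (x * s) \<noteq> 0" "1 - lt1 * s \<noteq> 0" "1 - q * ht1 * s / Q1 \<noteq> 0"
    using qgeneric_neq_1[OF qgeneric_div_q[OF g(4)]] qgeneric_neq_1[OF g(3)]
      qgeneric_neq_1[OF qgeneric_div_q[OF g(2)]] qgeneric_neq_1[OF g(1)] by auto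
  define Rm Rp Fm Fp where "Rm = (1 - x * s) / (1 - x * s / Q1)"
    and "Rp = (1 - q * (x * s) / Q1) / (1 - q * (x * s))"
    and "Fm = (1 - ht1 * s / Q1) / (Qe2 * (1 - lt1 * s))"
    and "Fp = Qe2 * (1 - q * lt1 * s) / (1 - q * ht1 * s / Q1)"
  have a: "coef_b (1 / s) * Fm = coef_Tm (Q1 / s) / La"
    and b: "coef_a (1 / s) * Fp = coef_Tp (1 / (q * s)) * La"
    and c: "(coef_Tm x - coef_Tm (Q1 / s)) * (Rm / La) + (coef_Tp x - coef_Tp (1 / (q * s))) * (La * Rp)
       - coef_T0 x = coef_c (1 / s)"
    using coef_b_factor2[OF s d(3)] coef_a_factor2[OF s d(4)] coef_T_diff_kernel2[OF x s d(1,2)]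
    unfolding Rm_def Rp_def Fm_def Fp_def by simp_all
  have "coef_b (1 / s) * (Fm * Rm * kernel2 u L) + coef_a (1 / s) * (Fp * Rp * kernel2 u L)
        + coef_c (1 / s) * kernel2 u L
      = (coef_b (1 / s) * Fm) * (Rm * kernel2 u L) + (coef_a (1 / s) * Fp) * (Rp * kernel2 u L)
        + coef_c (1 / s) * kernel2 u L"
    by (simp add: ac_simps)
  also have "\<dots> = coef_Tm x * (Rm / La * kernel2 u L) + coef_Tp x * (La * Rp * kernel2 u L)
      - coef_T0 x * kernel2 u L"
    unfolding a b c[symmetric] using atoms_nonzero by (simp add: field_simps)
  finally show ?thesis
    unfolding kernel2_shift_u_minus kernel2_shift_u_plus[OF gen] kernel2_shift_L_minus
      kernel2_shift_L_plus[OF gen] y x_def[symmetric] s_def[symmetric]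
      Rm_def[symmetric] Rp_def[symmetric] Fm_def[symmetric] Fp_def[symmetric]
    by (simp add: ac_simps)
qed

lemma bilat_summable_kernel2:
  assumes gen: "generic2 u L0" and j: "- 1 \<le> j" "j \<le> int N + 1"
  shows "bilat_summable (\<lambda>n. kernel2 u (L0 + of_int n * Lq) * (1 / exp (L0 + of_int n * Lq)) powi j)"
proof -
  define A1 B1 A2 B2 where "A1 = q * ht1 * exp L0 / Q1" and "B1 = q * lt1 * exp L0"
    and "A2 = q * exp (u + L0)" and "B2 = q * exp (u + L0) / Q1"
  define z where "z = qpw Lq (lam1 + a2 + of_nat N - of_int j)"
  have "kernel2 u (L0 + of_int n * Lq) * (1 / exp (L0 + of_int n * Lq)) powi j
      = exp (lam1 * u) * exp ((lam1 + a2 + of_nat N - of_int j) * L0)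
        * (qratio q (A1 * q powi n) (B1 * q powi n) * qratio q (A2 * q powi n) (B2 * q powi n)
           * z powi n)"
    for n
  proof -
    have "1 / exp (L0 + of_int n * Lq) = exp (- (L0 + of_int n * Lq))"
      unfolding exp_minus by (simp add: inverse_eq_divide)
    then have pw: "(1 / exp (L0 + of_int n * Lq)) powi j
        = exp (of_int j * (- L0) + of_int n * (- of_int j * Lq))"
      by (simp add: exp_power_int algebra_simps)
    show ?thesis
      unfolding pw kernel2_def A1_def B1_def A2_def B2_def z_def qpw_def exp_power_int
      by (simp add: exp_add exp_diff exp_minus algebra_simps divide_inverse)
  qed
  moreover have "bilat_summable (\<lambda>n. qratio q (A1 * q powi n) (B1 * q powi n)
      * qratio q (A2 * q powi n) (B2 * q powi n) * z powi n)"
  proof (rule bilat_summable_qratio_geometric[OF q_lt1])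
    show "qgeneric q A1" "qgeneric q A2" "qgeneric q B1" "qgeneric q B2"
      using gen unfolding generic2_def A1_def A2_def B1_def B2_def by auto
    show "A1 \<noteq> 0" "A2 \<noteq> 0" "B1 \<noteq> 0" "B2 \<noteq> 0" "z \<noteq> 0"
      unfolding A1_def A2_def B1_def B2_def z_def using params_nonzero by (simp_all add: qpw_nonzero)
    show "cmod z < 1"
      unfolding z_def by (rule norm_qpw_lam1_a2_less_1[OF j(2)])
    have "A1 * A2 / (B1 * B2) = ht1 / lt1"
      unfolding A1_def A2_def B1_def B2_def using params_nonzero by (simp add: field_simps)
    then show "cmod (A1 * A2 / (B1 * B2) / z) < 1"
      using norm_qpw_lam2_a1_less_1[OF j(1)] unfolding ht1_div_lt1[of j] z_def
      by (simp add: qpw_nonzero)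
  qed simp
  ultimately show ?thesis
    by (simp add: bilat_summable_cmult)
qed

lemma generic2_lattice:
  assumes "generic2 u L"
  shows "generic2 u (L + of_int n * Lq)"
proof -
  have g: "qgeneric q (q * ht1 * exp L / Q1)" "qgeneric q (q * lt1 * exp L)"
    "qgeneric q (q * exp (u + L))" "qgeneric q (q * exp (u + L) / Q1)"
    using assms unfolding generic2_def by auto
  have "q * ht1 * exp (L + of_int n * Lq) / Q1 = q * ht1 * exp L / Q1 * exp (of_int n * Lq)"
    "q * lt1 * exp (L + of_int n * Lq) = q * lt1 * exp L * exp (of_int n * Lq)"
    "q * exp (u + (L + of_int n * Lq)) = q * exp (u + L) * exp (of_int n * Lq)"
    "q * exp (u + (L + of_int n * Lq)) / Q1 = q * exp (u + L) / Q1 * exp (of_int n * Lq)"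
    by (simp_all add: exp_add)
  then show ?thesis
    unfolding generic2_def using qgeneric_lattice[OF g(1)] qgeneric_lattice[OF g(2)]
      qgeneric_lattice[OF g(3)] qgeneric_lattice[OF g(4)] by presburger
qed

lemma generic2_shift_u:
  assumes "generic2 u L"
  shows "generic2 (u - Lq) L" "generic2 (u + Lq) L"
proof -
  have g: "qgeneric q (q * ht1 * exp L / Q1)" "qgeneric q (q * lt1 * exp L)"
    "qgeneric q (q * exp (u + L))" "qgeneric q (q * exp (u + L) / Q1)"
    using assms unfolding generic2_def by auto
  have "q * exp (u - Lq + L) = q * exp (u + L) / q"
    "q * exp (u - Lq + L) / Q1 = q * exp (u + L) / Q1 / q"
    by (simp_all add: exp_add exp_diff)
  then show "generic2 (u - Lq) L"
    unfolding generic2_def using g qgeneric_div_q[OF g(3)] qgeneric_div_q[OF g(4)] by simp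
  have "q * exp (u + Lq + L) = q * exp (u + L) * q"
    "q * exp (u + Lq + L) / Q1 = q * exp (u + L) / Q1 * q"
    by (simp_all add: exp_add)
  then show "generic2 (u + Lq) L"
    unfolding generic2_def using g qgeneric_mult_q[OF g(3)] qgeneric_mult_q[OF g(4)]
    by (simp add: ac_simps)
qed

definition "jackson2 u L0
    = bilat_sum (\<lambda>n. kernel2 u (L0 + of_int n * Lq) * Pc (1 / exp (L0 + of_int n * Lq)))"

lemma jackson2_eigen:
  assumes gen: "generic2 u L0"
  shows "bilat_summable (\<lambda>n. kernel2 u (L0 + of_int n * Lq) * Pc (1 / exp (L0 + of_int n * Lq)))"
    and "coef_Tm (exp u) * jackson2 (u - Lq) L0 + coef_Tp (exp u) * jackson2 (u + Lq) L0
           - coef_T0 (exp u) * jackson2 u L0 = E0 * jackson2 u L0"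
proof -
  note eigen = bilat_sum_kernel_eigen[where W = "\<lambda>n. 1 / exp (L0 + of_int n * Lq)" and \<rho> = "1 / q"
      and P = Pc and cf = c and a = coef_b and b = coef_a and c = coef_c and E = E0
      and Km = "\<lambda>n. kernel2 (u - Lq) (L0 + of_int n * Lq)" and Kz = "\<lambda>n. kernel2 u (L0 + of_int n * Lq)"
      and Kp = "\<lambda>n. kernel2 (u + Lq) (L0 + of_int n * Lq)"]
  have prems: "1 / exp (L0 + of_int (n + 1) * Lq) = 1 / q * (1 / exp (L0 + of_int n * Lq))"
    "coef_Tm (exp u) * kernel2 (u - Lq) (L0 + of_int n * Lq)
       + coef_Tp (exp u) * kernel2 (u + Lq) (L0 + of_int n * Lq)
       - coef_T0 (exp u) * kernel2 u (L0 + of_int n * Lq)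
     = coef_b (1 / exp (L0 + of_int n * Lq)) * kernel2 u (L0 + of_int (n - 1) * Lq)
       + coef_a (1 / exp (L0 + of_int n * Lq)) * kernel2 u (L0 + of_int (n + 1) * Lq)
       + coef_c (1 / exp (L0 + of_int n * Lq)) * kernel2 u (L0 + of_int n * Lq)" for n
    using kernel2_qdiff[OF generic2_lattice[OF gen, of n]]
    by (simp_all add: exp_add algebra_simps)
  have adjoint: "(coef_c w - E0) * Pc w + coef_b (1 / q * w) * Pc (1 / q * w)
      + coef_a (w / (1 / q)) * Pc (w / (1 / q)) = 0" if "w \<noteq> 0" for w
    using Pc_adjoint[OF that] by (simp add: ac_simps)
  have summable: "bilat_summable (\<lambda>n. K n * (1 / exp (L0 + of_int n * Lq)) powi j)"
    if "K \<in> {\<lambda>n. kernel2 (u - Lq) (L0 + of_int n * Lq), \<lambda>n. kernel2 u (L0 + of_int n * Lq),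
              \<lambda>n. kernel2 (u + Lq) (L0 + of_int n * Lq)}" "- 1 \<le> j" "j \<le> int N + 1" for K j
    using that generic2_shift_u[OF gen] gen by (auto intro: bilat_summable_kernel2)
  show "bilat_summable (\<lambda>n. kernel2 u (L0 + of_int n * Lq) * Pc (1 / exp (L0 + of_int n * Lq)))"
    by (rule eigen(1)[OF prems(1) _ _ _ laurent1_coef_b laurent1_coef_a adjoint prems(2) summable])
      (auto simp: Pc_def)
  show "coef_Tm (exp u) * jackson2 (u - Lq) L0 + coef_Tp (exp u) * jackson2 (u + Lq) L0
           - coef_T0 (exp u) * jackson2 u L0 = E0 * jackson2 u L0"
    unfolding jackson2_def
    by (rule eigen(2)[OF prems(1) _ _ _ laurent1_coef_b laurent1_coef_a adjoint prems(2) summable])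
      (auto simp: Pc_def)
qed

lemma jackson2_lattice:
  assumes "generic2 u L0"
  shows "jackson2 u (L0 + of_int d * Lq) = jackson2 u L0"
  using bilat_sum_shift[OF jackson2_eigen(1)[OF assms], of d]
  unfolding jackson2_def by (simp add: algebra_simps)

lemma g2_args:
  "qpw Lq (- lam1 + h1 - a1 + 3/2) * t1 / exp M = q * ht1 * exp (- M) / Q1"
  "q * exp u / exp M = q * exp (u + - M)"
  "qpw Lq (l1 + 1/2) * t1 / exp M = q * lt1 * exp (- M)"
  "qpw Lq (- lam1 - a1 + 1) * exp u / exp M = q * exp (u + - M) / Q1"
proof -
  have e: "- lam1 + h1 - a1 + 3/2 = 1 + (h1 + 1/2) - (lam1 + a1)"
    by simp
  have "qpw Lq (- lam1 + h1 - a1 + 3/2) = q * qpw Lq (h1 + 1/2) / qpw Lq (lam1 + a1)"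
    unfolding e qpw_add qpw_diff by (simp add: qpw_def)
  moreover have "qpw Lq (l1 + 1/2) = q * qpw Lq (l1 - 1/2)"
    by (simp add: qpw_def exp_add[symmetric] algebra_simps)
  moreover have "qpw Lq (- lam1 - a1 + 1) = q / qpw Lq (lam1 + a1)"
    by (simp add: qpw_def exp_diff[symmetric] algebra_simps)
  ultimately show "qpw Lq (- lam1 + h1 - a1 + 3/2) * t1 / exp M = q * ht1 * exp (- M) / Q1"
    "q * exp u / exp M = q * exp (u + - M)" "qpw Lq (l1 + 1/2) * t1 / exp M = q * lt1 * exp (- M)"
    "qpw Lq (- lam1 - a1 + 1) * exp u / exp M = q * exp (u + - M) / Q1"
    unfolding lt1_def ht1_def Q1_def by (simp_all add: exp_add exp_diff exp_minus field_simps)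
qed

lemma g2_term_eq_kernel2:
  fixes Lxi :: "complex \<Rightarrow> complex" and u :: complex and n :: int
  defines "L0 \<equiv> - Lxi u"
  shows "g2_term Lq t1 t2 h1 l1 l2 a1 a2 b lam1 N Lxi E0 u n
      = qratio q (q * lt1 * exp L0) (q * ht1 * exp L0 / Q1)
        * qratio q (q * exp (u + L0) / Q1) (q * exp (u + L0))
        * exp (- lam1 * u) * (kernel2 u (L0 + of_int n * Lq) * Pc (1 / exp (L0 + of_int n * Lq)))"
proof -
  define C1 D1 C2 D2 where "C1 = q * ht1 * exp L0 / Q1" and "D1 = q * lt1 * exp L0"
    and "C2 = q * exp (u + L0)" and "D2 = q * exp (u + L0) / Q1"
  have sum: "(\<Sum>k = 0..N. qpw Lq ((lam1 + a2 + of_nat N - of_nat k) * of_int n)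
        * exp ((- lam1 - a2 - of_nat N + of_nat k) * Lxi u) * c k)
      = exp ((lam1 + a2 + of_nat N) * (L0 + of_int n * Lq)) * Pc (1 / exp (L0 + of_int n * Lq))"
    unfolding Pc_def sum_distrib_left atLeast0AtMost L0_def
  proof (intro sum.cong refl)
    fix k
    have "(1 / exp (- Lxi u + of_int n * Lq)) ^ k = exp (of_nat k * (Lxi u - of_int n * Lq))"
      unfolding exp_of_nat_mult by (simp add: exp_diff exp_add exp_minus inverse_eq_divide power_divide)
    then show "qpw Lq ((lam1 + a2 + of_nat N - of_nat k) * of_int n)
        * exp ((- lam1 - a2 - of_nat N + of_nat k) * Lxi u) * c k
      = exp ((lam1 + a2 + of_nat N) * (- Lxi u + of_int n * Lq))
        * (c k * (1 / exp (- Lxi u + of_int n * Lq)) ^ k)"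
      by (simp add: qpw_def exp_add[symmetric] algebra_simps)
  qed
  have poch: "qpoch q D1 n * qpoch q D2 n / (qpoch q C1 n * qpoch q C2 n)
      = qratio q D1 C1 * qratio q D2 C2
        * (qratio q (C1 * q powi n) (D1 * q powi n) * qratio q (C2 * q powi n) (D2 * q powi n))"
    unfolding times_divide_times_eq[symmetric] qpoch_div_qpoch by (simp add: ac_simps)
  have "kernel2 u (L0 + of_int n * Lq) = exp (lam1 * u)
      * (qratio q (C1 * q powi n) (D1 * q powi n) * qratio q (C2 * q powi n) (D2 * q powi n))
      * exp ((lam1 + a2 + of_nat N) * (L0 + of_int n * Lq))"
    unfolding kernel2_def C1_def D1_def C2_def D2_def exp_power_int
    by (simp add: exp_add ac_simps)
  then show ?thesis
    using poch unfolding g2_term_def Let_def g2_args L0_def[symmetric] sum C1_def D1_def C2_def D2_def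
    by (simp add: exp_minus field_simps)
qed

lemma g2_eq_jackson2:
  fixes Lxi :: "complex \<Rightarrow> complex"
  assumes gen: "generic2 u (- Lxi u)"
  shows "bilat_summable (g2_term Lq t1 t2 h1 l1 l2 a1 a2 b lam1 N Lxi E0 u)"
    and "g2 Lq t1 t2 h1 l1 l2 a1 a2 b lam1 N Lxi E0 u = (1 - q) * jackson2 u (- Lxi u)"
proof -
  define L0 where "L0 = - Lxi u"
  define C1 D1 C2 D2 where "C1 = q * ht1 * exp L0 / Q1" and "D1 = q * lt1 * exp L0"
    and "C2 = q * exp (u + L0)" and "D2 = q * exp (u + L0) / Q1"
  have g: "qgeneric q C1" "qgeneric q D1" "qgeneric q C2" "qgeneric q D2"
    using gen unfolding generic2_def C1_def D1_def C2_def D2_def L0_def by auto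
  note g2_term_eq = g2_term_eq_kernel2[of Lxi u, folded L0_def, folded C1_def D1_def C2_def D2_def]
  note summable = jackson2_eigen(1)[OF gen, folded L0_def]
  show "bilat_summable (g2_term Lq t1 t2 h1 l1 l2 a1 a2 b lam1 N Lxi E0 u)"
    unfolding g2_term_eq by (rule bilat_summable_cmult[OF summable])
  have "g2 Lq t1 t2 h1 l1 l2 a1 a2 b lam1 N Lxi E0 u
      = (1 - q) * exp (lam1 * u) * (qratio q C1 D1 * qratio q C2 D2)
        * bilat_sum (g2_term Lq t1 t2 h1 l1 l2 a1 a2 b lam1 N Lxi E0 u)"
    unfolding g2_def Let_def g2_args L0_def[symmetric] qratio_def C1_def D1_def C2_def D2_def
    by (simp add: field_simps)
  also have "\<dots> = (1 - q) * (qratio q C1 D1 * qratio q D1 C1) * (qratio q C2 D2 * qratio q D2 C2)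
      * jackson2 u L0"
    unfolding g2_term_eq bilat_sum_cmult[OF summable] jackson2_def by (simp add: exp_minus field_simps)
  finally show "g2 Lq t1 t2 h1 l1 l2 a1 a2 b lam1 N Lxi E0 u = (1 - q) * jackson2 u (- Lxi u)"
    unfolding qratio_inverse[OF q_lt1 g(1,2)] qratio_inverse[OF q_lt1 g(3,4)] L0_def by simp
qed

section \<open>The eigenfunctions\<close>

lemma shift_in_lattice:
  fixes Lxi :: "complex \<Rightarrow> complex"
  assumes "(\<exists>w. \<forall>v. Lxi v = w) \<or> (\<exists>w. \<forall>v. Lxi v = w + v)"
  obtains d :: int where "Lxi (u - Lq) = Lxi u - of_int d * Lq" "Lxi (u + Lq) = Lxi u + of_int d * Lq"
proof (cases "\<exists>w. \<forall>v. Lxi v = w")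
  case True
  then show ?thesis
    using that[of 0] by auto
next
  case False
  then obtain w where "\<forall>v. Lxi v = w + v"
    using assms by blast
  then show ?thesis
    using that[of 1] by (simp add: algebra_simps)
qed

lemma g1_eigen:
  fixes Lxi :: "complex \<Rightarrow> complex"
  assumes gen: "generic1 u (Lxi u)"
    and shift: "Lxi (u - Lq) = Lxi u - of_int d * Lq" "Lxi (u + Lq) = Lxi u + of_int d * Lq"
  shows "A4 Lq t1 t2 h1 h2 l1 l2 a1 a2 b (g1 Lq t1 t2 h1 l1 l2 a1 a2 b lam1 N Lxi E0) u
           = E0 * g1 Lq t1 t2 h1 l1 l2 a1 a2 b lam1 N Lxi E0 u"
proof -
  define L0 where "L0 = Lxi u"
  have shift': "Lxi (u - Lq) = L0 + of_int (- d) * Lq" "Lxi (u + Lq) = L0 + of_int d * Lq"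
    using shift unfolding L0_def by simp_all
  have g1_at: "g1 Lq t1 t2 h1 l1 l2 a1 a2 b lam1 N Lxi E0 v = (1 - q) * jackson1 v L0"
    if gen_v: "generic1 v L0" and e: "Lxi v = L0 + of_int e * Lq" for v e
    using g1_eq_jackson1(2)[of v Lxi] generic1_lattice[OF gen_v, of e]
      jackson1_lattice[OF gen_v, of e] e
    by simp
  show ?thesis
    unfolding A4_eq g1_at[OF generic1_shift_u(1)[OF gen[folded L0_def]] shift'(1)]
      g1_at[OF generic1_shift_u(2)[OF gen[folded L0_def]] shift'(2)] g1_eq_jackson1(2)[of u Lxi, OF gen]
    using arg_cong[OF jackson1_eigen(2)[OF gen], of "\<lambda>z. (1 - q) * z"] unfolding L0_def
    by (simp add: algebra_simps)
qed

lemma g2_eigen: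
  fixes Lxi :: "complex \<Rightarrow> complex"
  assumes gen: "generic2 u (- Lxi u)"
    and shift: "Lxi (u - Lq) = Lxi u - of_int d * Lq" "Lxi (u + Lq) = Lxi u + of_int d * Lq"
  shows "A4 Lq t1 t2 h1 h2 l1 l2 a1 a2 b (g2 Lq t1 t2 h1 l1 l2 a1 a2 b lam1 N Lxi E0) u
           = E0 * g2 Lq t1 t2 h1 l1 l2 a1 a2 b lam1 N Lxi E0 u"
proof -
  define L0 where "L0 = - Lxi u"
  have shift': "- Lxi (u - Lq) = L0 + of_int d * Lq" "- Lxi (u + Lq) = L0 + of_int (- d) * Lq"
    using shift unfolding L0_def by simp_all
  have g2_at: "g2 Lq t1 t2 h1 l1 l2 a1 a2 b lam1 N Lxi E0 v = (1 - q) * jackson2 v L0"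
    if gen_v: "generic2 v L0" and e: "- Lxi v = L0 + of_int e * Lq" for v e
    using g2_eq_jackson2(2)[of v Lxi] generic2_lattice[OF gen_v, of e]
      jackson2_lattice[OF gen_v, of e] e
    by simp
  show ?thesis
    unfolding A4_eq g2_at[OF generic2_shift_u(1)[OF gen[folded L0_def]] shift'(1)]
      g2_at[OF generic2_shift_u(2)[OF gen[folded L0_def]] shift'(2)] g2_eq_jackson2(2)[of u Lxi, OF gen]
    using arg_cong[OF jackson2_eigen(2)[OF gen], of "\<lambda>z. (1 - q) * z"] unfolding L0_def
    by (simp add: algebra_simps)
qed

end

theorem theorem3p3:
  fixes Lq t1 t2 h1 h2 l1 l2 a1 a2 b lam1 lam2 E0 u :: complex
    and N :: nat
    and Lxi :: "complex \<Rightarrow> complex"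
  assumes q_lt1: "cmod (exp Lq) < 1"
    and t_nz: "t1 \<noteq> 0" "t2 \<noteq> 0"
    and h2_def: "h2 = l2 - 1 - of_nat N"
    and lam1_def: "lam1 = (h1 + h2 - l1 - l2 - a1 - a2 - b + 2) / 2"
    and lam2_def: "lam2 = lam1 + b"
    and real1: "lam2 + a1 \<in> \<real>" "Re (lam2 + a1) > 1"
    and real2: "lam1 + a2 \<in> \<real>" "Re (lam1 + a2) > 1"
    and root: "cpoly Lq t1 t2 h1 l1 l2 a1 a2 b lam1 N E0 = 0"
    and xi_shape: "(\<exists>w. \<forall>v. Lxi v = w) \<or> (\<exists>w. \<forall>v. Lxi v = w + v)"
    and nondeg: "let q = exp Lq; x = exp u; xi = exp (Lxi u) in
        qgeneric q (qpw Lq (- l1 + 1/2) * xi / t1) \<and> qgeneric q (qpw Lq (lam1 + a1) * xi / x)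
      \<and> qgeneric q (qpw Lq (lam1 - h1 + a1 - 1/2) * xi / t1) \<and> qgeneric q (xi / x)
      \<and> qgeneric q (qpw Lq (- lam1 + h1 - a1 + 3/2) * t1 / xi) \<and> qgeneric q (q * x / xi)
      \<and> qgeneric q (qpw Lq (l1 + 1/2) * t1 / xi) \<and> qgeneric q (qpw Lq (- lam1 - a1 + 1) * x / xi)"
  shows "bilat_summable (g1_term Lq t1 t2 h1 l1 l2 a1 a2 b lam1 N Lxi E0 u)
       \<and> bilat_summable (g2_term Lq t1 t2 h1 l1 l2 a1 a2 b lam1 N Lxi E0 u)
       \<and> A4 Lq t1 t2 h1 h2 l1 l2 a1 a2 b (g1 Lq t1 t2 h1 l1 l2 a1 a2 b lam1 N Lxi E0) u
           = E0 * g1 Lq t1 t2 h1 l1 l2 a1 a2 b lam1 N Lxi E0 u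
       \<and> A4 Lq t1 t2 h1 h2 l1 l2 a1 a2 b (g2 Lq t1 t2 h1 l1 l2 a1 a2 b lam1 N Lxi E0) u
           = E0 * g2 Lq t1 t2 h1 l1 l2 a1 a2 b lam1 N Lxi E0 u"
proof -
  interpret q_heun Lq t1 t2 h1 h2 l1 l2 a1 a2 b lam1 E0 N
    using q_lt1 t_nz h2_def lam1_def real1 real2 root unfolding lam2_def
    by unfold_locales (simp_all add: add_ac)
  obtain d :: int
    where shift: "Lxi (u - Lq) = Lxi u - of_int d * Lq" "Lxi (u + Lq) = Lxi u + of_int d * Lq"
    using shift_in_lattice[OF xi_shape] .
  have gen1: "generic1 u (Lxi u)" and gen2: "generic2 u (- Lxi u)"
    using nondeg unfolding Let_def generic1_def generic2_def g1_args g2_args by simp_all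
  show ?thesis
    using g1_eq_jackson1(1)[of u Lxi, OF gen1] g2_eq_jackson2(1)[of u Lxi, OF gen2]
      g1_eigen[OF gen1 shift] g2_eigen[OF gen2 shift] by blast
qed

end
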